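(* Let $n\ge 1$, $N=2^n$, and let $(\omega,\gamma)$ be a 4-round key-schedule that is good (in the sense defined in the context) with parameters $\delta_1,\delta_2,\delta_3$. Consider the 4-round cipher $\mathsf{KAFw}^{F,(\omega,\gamma)}$ built on a uniformly random function $F:\{0,1\}^n\to\{0,1\}^n$. Then for all non-negative integers $q_f,q_e$, $$\mathbf{Adv}^{\oplus\text{-rka}}_{\mathsf{KAFw}^{F,(\omega,\gamma)}}(q_f,q_e)\le 2\delta_1 q_e q_f+(\delta_2+\delta_3)q_e^2+\frac{2q_eq_f+7q_e^2}{N}.$$
   Context: Let $n\ge1$ and $N=2^n$; identify $\{0,1\}^n$ with $\mathbb{F}_2^n$ and write $X\|Y$ for concatenation. A $t$-round key-schedule $(\omega,\gamma)$ consists of maps $\omega=(\omega_0,\omega_1,\omega_2,\omega_3)$ and $\gamma=(\gamma_1,\dots,\gamma_t)$, each from $\{0,1\}^n$ to $\{0,1\}^n$. For $f:\{0,1\}^n\to\{0,1\}^n$ and $\kappa\in\{0,1\}^n$ let $\Psi^f_\kappa(W_L\|W_R)=W_R\|(W_L\oplus f(\kappa\oplus W_R))$. The $t$-round cipher with key $k\in\{0,1\}^n$ is $\mathsf{KAFw}^{f,(\omega,\gamma)}_k(W)=(\omega_2(k)\|\omega_3(k))\oplus\Psi^f_{\gamma_t(k)}\circ\cdots\circ\Psi^f_{\gamma_1(k)}\big((\omega_0(k)\|\omega_1(k))\oplus W\big)$ (the same $f$ in every round). A 4-round key-schedule is good with parameters $\delta_1,\delta_2,\delta_3$ if, with $\varphi_1(k)=\omega_1(k)\oplus\gamma_1(k)$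 and $\varphi_4(k)=\omega_2(k)\oplus\gamma_4(k)$: (i) for $i\in\{1,4\}$, for all $\Delta,y$, $\Pr_{k}[\varphi_i(k\oplus\Delta)=y]\le\delta_1$, and for all $\Delta\ne\Delta'$ and all $y$, $\Pr_k[\varphi_i(k\oplus\Delta)\oplus\varphi_i(k\oplus\Delta')=y]\le\delta_2$; (ii) for all $\Delta,\Delta',y$, $\Pr_k[\varphi_1(k\oplus\Delta)\oplus\varphi_4(k\oplus\Delta')=y]\le\delta_3$; $k$ uniform in $\{0,1\}^n$. Related-key security: for a blockcipher $E$ with $n$-bit keys and $2n$-bit blocks and a key $k$, the oracle $\mathsf{RK}[E_k]$ maps $(\Delta,LR)\mapsto E_{k\oplus\Delta}(LR)$ and its inverse maps $(\Delta,ST)\mapsto E^{-1}_{k\oplus\Delta}(ST)$. A computationally unbounded distinguisher gets two-sided access to the related-key oracle and (forward) access to $F$. Real world: $k$ uniform, $F$ uniform, oracles $(\mathsf{RK}[\mathsf{KAFw}^{F,(\omega,\gamma)}_k],F)$. Ideal world: $(\mathsf{RK}[\mathsf{IC}_k],F)$ with $\mathsf{IC}$ a uniformly random blockcipher ($2n$-bit blocks, $n$-bit keys) independent of $F$, $k$ uniform. The advantage is the absolute difference of the probabilities of outputting 1, and $\mathbf{Adv}^{\oplus\text{-rka}}(q_f,q_e)$ is its maximum over distinguishers making $q_f$ queries to $F$ and $q_e$ related-key queries in total. *)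

theory Defs
  imports "HOL-Library.Word" "HOL-Probability.Probability_Mass_Function"
begin

text \<open>n-bit strings are modelled as \<open>'n word\<close> (with \<open>n = LENGTH('n) \<ge> 1\<close>),
  2n-bit blocks \<open>W_L || W_R\<close> as pairs of n-bit words; \<open>\<oplus>\<close> is bitwise xor.\<close>

definition xor2 :: "'n::len word \<times> 'n word \<Rightarrow> 'n word \<times> 'n word \<Rightarrow> 'n word \<times> 'n word" where
  "xor2 A B = (xor (fst A) (fst B), xor (snd A) (snd B))"

definition Psi :: "('n::len word \<Rightarrow> 'n word) \<Rightarrow> 'n word \<Rightarrow> 'n word \<times> 'n word \<Rightarrow> 'n word \<times> 'n word" where
  "Psi f \<kappa> W = (snd W, xor (fst W) (f (xor \<kappa> (snd W))))"

definition KAFw ::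
  "('n::len word \<Rightarrow> 'n word) \<Rightarrow> ('n word \<Rightarrow> 'n word) \<Rightarrow> ('n word \<Rightarrow> 'n word) \<Rightarrow>
   ('n word \<Rightarrow> 'n word) \<Rightarrow> ('n word \<Rightarrow> 'n word) \<Rightarrow> ('n word \<Rightarrow> 'n word) list \<Rightarrow>
   'n word \<Rightarrow> 'n word \<times> 'n word \<Rightarrow> 'n word \<times> 'n word" where
  "KAFw f w0 w1 w2 w3 gs k W =
     xor2 (w2 k, w3 k) (fold (\<lambda>g. Psi f (g k)) gs (xor2 (w0 k, w1 k) W))"

definition prk :: "('n::len word \<Rightarrow> bool) \<Rightarrow> real" where
  "prk P = real (card {k::'n word. P k}) / real (CARD('n word))"

definition good_ks ::
  "('n::len word \<Rightarrow> 'n word) \<Rightarrow> ('n word \<Rightarrow> 'n word) \<Rightarrow> ('n word \<Rightarrow> 'n word) \<Rightarrow>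
   ('n word \<Rightarrow> 'n word) \<Rightarrow> real \<Rightarrow> real \<Rightarrow> real \<Rightarrow> bool" where
  "good_ks w1 w2 g1 g4 \<delta>1 \<delta>2 \<delta>3 \<longleftrightarrow>
     (let \<phi>1 = (\<lambda>k. xor (w1 k) (g1 k)); \<phi>4 = (\<lambda>k. xor (w2 k) (g4 k)) in
      (\<forall>\<phi>\<in>{\<phi>1, \<phi>4}.
         (\<forall>\<Delta> y. prk (\<lambda>k. \<phi> (xor k \<Delta>) = y) \<le> \<delta>1) \<and>
         (\<forall>\<Delta> \<Delta>' y. \<Delta> \<noteq> \<Delta>' \<longrightarrow> prk (\<lambda>k. xor (\<phi> (xor k \<Delta>)) (\<phi> (xor k \<Delta>')) = y) \<le> \<delta>2)) \<and>
      (\<forall>\<Delta> \<Delta>' y. prk (\<lambda>k. xor (\<phi>1 (xor k \<Delta>)) (\<phi>4 (xor k \<Delta>')) = y) \<le> \<delta>3))"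

text \<open>Adaptive, possibly randomized, computationally unbounded distinguishers as
  interaction trees: output a bit, flip a fair coin, query \<open>F\<close>, or make a forward /
  inverse related-key query \<open>(\<Delta>, X)\<close>.\<close>
datatype ('a, 'b) dist =
    Out bool
  | Coin "bool \<Rightarrow> ('a, 'b) dist"
  | QF 'a "'a \<Rightarrow> ('a, 'b) dist"
  | QE 'a 'b "'b \<Rightarrow> ('a, 'b) dist"
  | QD 'a 'b "'b \<Rightarrow> ('a, 'b) dist"

primrec bounded :: "('a, 'b) dist \<Rightarrow> nat \<Rightarrow> nat \<Rightarrow> bool" where
  "bounded (Out b) qf qe = True"
| "bounded (Coin g) qf qe = (\<forall>c. bounded (g c) qf qe)"
| "bounded (QF x g) qf qe = (0 < qf \<and> (\<forall>y. bounded (g y) (qf - 1) qe))"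
| "bounded (QE d x g) qf qe = (0 < qe \<and> (\<forall>y. bounded (g y) qf (qe - 1)))"
| "bounded (QD d x g) qf qe = (0 < qe \<and> (\<forall>y. bounded (g y) qf (qe - 1)))"

primrec run :: "('a, 'b) dist \<Rightarrow> ('a \<Rightarrow> 'a) \<Rightarrow> ('a \<Rightarrow> 'b \<Rightarrow> 'b) \<Rightarrow> ('a \<Rightarrow> 'b \<Rightarrow> 'b) \<Rightarrow> bool pmf" where
  "run (Out b) F E D = return_pmf b"
| "run (Coin g) F E D = pmf_of_set UNIV \<bind> (\<lambda>c. run (g c) F E D)"
| "run (QF x g) F E D = run (g (F x)) F E D"
| "run (QE d x g) F E D = run (g (E d x)) F E D"
| "run (QD d x g) F E D = run (g (D d x)) F E D"

definition real_world ::
  "('n::len word \<Rightarrow> 'n word) \<Rightarrow> ('n word \<Rightarrow> 'n word) \<Rightarrow> ('n word \<Rightarrow> 'n word) \<Rightarrow>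
   ('n word \<Rightarrow> 'n word) \<Rightarrow> ('n word \<Rightarrow> 'n word) list \<Rightarrow>
   ('n word, 'n word \<times> 'n word) dist \<Rightarrow> bool pmf" where
  "real_world w0 w1 w2 w3 gs A =
     pmf_of_set (UNIV :: 'n word set) \<bind> (\<lambda>k.
     pmf_of_set (UNIV :: ('n word \<Rightarrow> 'n word) set) \<bind> (\<lambda>F.
       run A F (\<lambda>\<Delta>. KAFw F w0 w1 w2 w3 gs (xor k \<Delta>))
               (\<lambda>\<Delta>. inv (KAFw F w0 w1 w2 w3 gs (xor k \<Delta>)))))"

definition ideal_world ::
  "('n::len word, 'n word \<times> 'n word) dist \<Rightarrow> bool pmf" where
  "ideal_world A =
     pmf_of_set (UNIV :: 'n word set) \<bind> (\<lambda>k.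
     pmf_of_set {IC :: 'n word \<Rightarrow> 'n word \<times> 'n word \<Rightarrow> 'n word \<times> 'n word. \<forall>key. bij (IC key)} \<bind> (\<lambda>IC.
     pmf_of_set (UNIV :: ('n word \<Rightarrow> 'n word) set) \<bind> (\<lambda>F.
       run A F (\<lambda>\<Delta>. IC (xor k \<Delta>)) (\<lambda>\<Delta>. inv (IC (xor k \<Delta>))))))"

definition adv_rka ::
  "('n::len word \<Rightarrow> 'n word) \<Rightarrow> ('n word \<Rightarrow> 'n word) \<Rightarrow> ('n word \<Rightarrow> 'n word) \<Rightarrow>
   ('n word \<Rightarrow> 'n word) \<Rightarrow> ('n word \<Rightarrow> 'n word) list \<Rightarrow> nat \<Rightarrow> nat \<Rightarrow> real" where
  "adv_rka w0 w1 w2 w3 gs qf qe =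
     (SUP A \<in> {A :: ('n word, 'n word \<times> 'n word) dist. bounded A qf qe}.
        \<bar>pmf (real_world w0 w1 w2 w3 gs A) True - pmf (ideal_world A) True\<bar>)"

end

theory Submission
  imports Defs "HOL-Combinatorics.Transposition" "HOL-Analysis.Infinite_Products"
begin

text \<open>The proof is an instance of Patarin's H-coefficient technique, with the key revealed to the
  distinguisher after the interaction. Call the key bad for a transcript if the first- or
  fourth-round input to \<open>F\<close> of some related-key query collides with an \<open>F\<close>-query or with another
  such input; by the goodness of the key schedule this has probability at most
  \<open>2 \<delta>\<^sub>1 q\<^sub>e q\<^sub>f + (\<delta>\<^sub>2 + \<delta>\<^sub>3) q\<^sub>e\<^sup>2\<close>. For a good key, a random \<open>F\<close> that agrees with the
  \<open>F\<close>-queries has fresh and distinct second- and third-round inputs except with probability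
  \<open>(2 q\<^sub>e q\<^sub>f + 6 q\<^sub>e\<^sup>2) / N\<close>, and then answers all \<open>q\<^sub>e\<close> related-key queries correctly with
  probability exactly \<open>N\<^sup>-\<^sup>2\<^sup>q\<^sup>e\<close>. The ideal cipher answers them with probability at most
  \<open>1 / \<Prod>i<q\<^sub>e. (N\<^sup>2 - i) \<le> N\<^sup>-\<^sup>2\<^sup>q\<^sup>e / (1 - q\<^sub>e\<^sup>2 / N\<^sup>2)\<close>, so good transcripts are at least
  \<open>1 - (2 q\<^sub>e q\<^sub>f + 7 q\<^sub>e\<^sup>2) / N\<close> times as likely in the real world as in the ideal one.\<close>

lemma real_card_Un_le: "real (card (A \<union> B)) \<le> real (card A) + real (card B)"
  using card_Un_le[of A B] by (metis of_nat_add of_nat_mono)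

lemma real_card_le_Un3:
  assumes "finite (X \<union> Y \<union> Z)" and "S \<subseteq> X \<union> Y \<union> Z"
  shows "real (card S) \<le> real (card X) + real (card Y) + real (card Z)"
proof -
  have "real (card S) \<le> real (card (X \<union> Y \<union> Z))"
    using assms by (simp add: card_mono)
  also have "\<dots> \<le> real (card X) + real (card Y) + real (card Z)"
    using real_card_Un_le[of "X \<union> Y" Z] real_card_Un_le[of X Y] by linarith
  finally show ?thesis .
qed

lemma card_UN_le_mult:
  assumes "finite I" and "\<And>i. i \<in> I \<Longrightarrow> real (card (X i)) \<le> r"
  shows "real (card (\<Union>i\<in>I. X i)) \<le> real (card I) * r"
proof -
  have "real (card (\<Union>i\<in>I. X i)) \<le> (\<Sum>i\<in>I. real (card (X i)))"
    using card_UN_le[OF assms(1), of X] by (simp only: of_nat_sum[symmetric] of_nat_le_iff)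
  also have "\<dots> \<le> (\<Sum>i\<in>I. r)"
    using assms(2) by (rule sum_mono)
  finally show ?thesis by simp
qed

lemma card_UN_distinct_pairs_le:
  fixes X :: "'a \<Rightarrow> 'a \<Rightarrow> 'b set"
  assumes "finite T" and "0 \<le> r" and sym: "\<And>t t'. X t t' = X t' t"
    and "\<And>t t'. t \<in> T \<Longrightarrow> t' \<in> T \<Longrightarrow> t \<noteq> t' \<Longrightarrow> real (card (X t t')) \<le> r"
  shows "real (card (\<Union>t\<in>T. \<Union>t'\<in>T - {t}. X t t')) \<le> real (card T) ^ 2 / 2 * r"
proof -
  \<comment> \<open>By symmetry it suffices to take each unordered pair once, oriented by an injection into \<open>nat\<close>.\<close>
  obtain f :: "'a \<Rightarrow> nat" where f: "inj_on f T"
    using finite_imp_inj_to_nat_seg[OF assms(1)] by blast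
  define Pr where "Pr = {(t, t'). t \<in> T \<and> t' \<in> T \<and> f t < f t'}"
  have Pr: "Pr \<subseteq> T \<times> T" "Pr \<inter> prod.swap ` Pr = {}" "Pr \<union> prod.swap ` Pr \<subseteq> T \<times> T"
    by (auto simp: Pr_def)
  have union: "(\<Union>t\<in>T. \<Union>t'\<in>T - {t}. X t t') = (\<Union>(t, t')\<in>Pr. X t t')"
  proof (intro equalityI subsetI)
    fix k assume "k \<in> (\<Union>t\<in>T. \<Union>t'\<in>T - {t}. X t t')"
    then obtain t t' where "t \<in> T" "t' \<in> T" "t \<noteq> t'" "k \<in> X t t'" by blast
    moreover have "f t \<noteq> f t'" using f \<open>t \<in> T\<close> \<open>t' \<in> T\<close> \<open>t \<noteq> t'\<close> by (auto dest: inj_onD)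
    ultimately show "k \<in> (\<Union>(t, t')\<in>Pr. X t t')"
      unfolding Pr_def using sym by (cases "f t < f t'") force+
  qed (auto simp: Pr_def)
  have "finite Pr" using Pr(1) assms(1) by (simp add: finite_subset)
  then have "real (card (\<Union>(t, t')\<in>Pr. X t t')) \<le> real (card Pr) * r"
    by (rule card_UN_le_mult) (auto simp: Pr_def intro: assms(4))
  moreover have "card Pr + card (prod.swap ` Pr) \<le> card (T \<times> T)"
    using Pr(2,3) assms(1) \<open>finite Pr\<close> by (metis card_Un_disjoint card_mono finite_SigmaI finite_imageI)
  then have "real (card Pr) \<le> real (card T) ^ 2 / 2"
    by (simp add: card_image card_cartesian_product power2_eq_square field_simps flip: of_nat_mult)
  ultimately show ?thesis
    unfolding union using assms(2) by (meson mult_right_mono order_trans)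
qed

lemma falling_prod_ge:
  fixes M c :: nat
  assumes "c \<le> M"
  shows "real M ^ c * (1 - real c ^ 2 / real M) \<le> real (\<Prod>i<c. M - i)"
proof (cases "M = 0")
  case False
  have "1 - real c ^ 2 / real M \<le> 1 - (\<Sum>i<c. real i / real M)"
  proof -
    have "(\<Sum>i<c. real i / real M) \<le> (\<Sum>i<c. real c / real M)"
      by (intro sum_mono divide_right_mono) auto
    then show ?thesis by (simp add: power2_eq_square)
  qed
  also have "\<dots> \<le> (\<Prod>i<c. 1 - real i / real M)"
    using assms by (intro Weierstrass_prod_ineq) auto
  finally have "real M ^ c * (1 - real c ^ 2 / real M) \<le> real M ^ c * (\<Prod>i<c. 1 - real i / real M)"
    by (simp add: mult_left_mono)
  also have "\<dots> = (\<Prod>i<c. real M * (1 - real i / real M))"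
    by (simp add: prod.distrib)
  also have "\<dots> = real (\<Prod>i<c. M - i)"
    using assms False by (simp add: of_nat_diff right_diff_distrib)
  finally show ?thesis .
qed (use assms in simp)

lemma card_proportional_by_fibres:
  assumes "finite G" and "G' \<subseteq> G"
    and "\<And>x. x \<in> G \<Longrightarrow> n * card {y \<in> G'. f y = f x} = card {y \<in> G. f y = f x}"
  shows "n * card G' = card G"
proof -
  have "f ` G' \<subseteq> f ` G" using assms(2) by (rule image_mono)
  then have "card G' = (\<Sum>v\<in>f ` G. card {y \<in> G'. f y = v})"
    using sum.group[OF finite_subset[OF assms(2,1)] finite_imageI[OF assms(1)], where g = f and h = "\<lambda>_. 1::nat"]
    by simp
  then have "n * card G' = (\<Sum>v\<in>f ` G. n * card {y \<in> G'. f y = v})"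
    by (simp add: sum_distrib_left)
  also have "\<dots> = (\<Sum>v\<in>f ` G. card {y \<in> G. f y = v})"
    using assms(3) by (intro sum.cong) auto
  also have "\<dots> = card G"
    using sum.group[of G "f ` G" f "\<lambda>_. 1::nat"] assms(1) by simp
  finally show ?thesis .
qed

lemma sum_group_by_value:
  fixes r :: "'u \<Rightarrow> 'y::finite"
  assumes "finite S"
  shows "(\<Sum>u\<in>S. f u (r u)) = (\<Sum>y\<in>UNIV. \<Sum>u | u \<in> S \<and> r u = y. f u y)"
proof -
  have "(\<Sum>u\<in>S. f u (r u)) = (\<Sum>y\<in>UNIV. \<Sum>u | u \<in> S \<and> r u = y. f u (r u))"
    using sum.group[of S UNIV r "\<lambda>u. f u (r u)"] assms by simp
  also have "\<dots> = (\<Sum>y\<in>UNIV. \<Sum>u | u \<in> S \<and> r u = y. f u y)"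
    by (intro sum.cong) auto
  finally show ?thesis .
qed

lemma card_insert_le_Suc: "card (insert x A) \<le> Suc (card A)"
  by (cases "finite A") (auto simp: card_insert_if)


section \<open>Transcripts and the H-coefficient technique\<close>

text \<open>A transcript records the answered \<open>F\<close>-queries \<open>(x, F x)\<close> and the related-key queries
  \<open>(\<Delta>, X, Y)\<close> with \<open>E\<^sub>k\<^sub>\<oplus>\<^sub>\<Delta>(X) = Y\<close>, whether they were asked forward or backward.\<close>

type_synonym ('a, 'b) transcript = "('a \<times> 'a) set \<times> ('a \<times> 'b \<times> 'b) set"

definition consistent :: "('a \<Rightarrow> 'a) \<Rightarrow> ('a \<Rightarrow> 'b \<Rightarrow> 'b) \<Rightarrow> ('a, 'b) transcript \<Rightarrow> bool" where
  "consistent F E \<tau> \<longleftrightarrow> (\<forall>(x, y) \<in> fst \<tau>. F x = y) \<and> (\<forall>(d, X, Y) \<in> snd \<tau>. E d X = Y)"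

definition add_f_query :: "'a \<Rightarrow> 'a \<Rightarrow> ('a, 'b) transcript \<Rightarrow> ('a, 'b) transcript" where
  "add_f_query x y \<tau> = (insert (x, y) (fst \<tau>), snd \<tau>)"

definition add_rk_query :: "'a \<Rightarrow> 'b \<Rightarrow> 'b \<Rightarrow> ('a, 'b) transcript \<Rightarrow> ('a, 'b) transcript" where
  "add_rk_query d X Y \<tau> = (fst \<tau>, insert (d, X, Y) (snd \<tau>))"

lemma consistent_empty [simp]: "consistent F E ({}, {})"
  by (simp add: consistent_def)

lemma consistent_add_f_query [simp]:
  "consistent F E (add_f_query x y \<tau>) \<longleftrightarrow> consistent F E \<tau> \<and> F x = y"
  by (auto simp: consistent_def add_f_query_def)

lemma consistent_add_rk_query [simp]:
  "consistent F E (add_rk_query d X Y \<tau>) \<longleftrightarrow> consistent F E \<tau> \<and> E d X = Y"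
  by (auto simp: consistent_def add_rk_query_def)

primrec expect_run ::
  "(('a, 'b) transcript \<Rightarrow> bool \<Rightarrow> real) \<Rightarrow> ('a, 'b) dist \<Rightarrow> ('a, 'b) transcript \<Rightarrow>
   ('a \<Rightarrow> 'a) \<Rightarrow> ('a \<Rightarrow> 'b \<Rightarrow> 'b) \<Rightarrow> real" where
  "expect_run h (Out c) \<tau> F E = h \<tau> c"
| "expect_run h (Coin g) \<tau> F E = (expect_run h (g True) \<tau> F E + expect_run h (g False) \<tau> F E) / 2"
| "expect_run h (QF x g) \<tau> F E = expect_run h (g (F x)) (add_f_query x (F x) \<tau>) F E"
| "expect_run h (QE d X g) \<tau> F E = expect_run h (g (E d X)) (add_rk_query d X (E d X) \<tau>) F E"
| "expect_run h (QD d Y g) \<tau> F E =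
     expect_run h (g (inv (E d) Y)) (add_rk_query d (inv (E d) Y) Y \<tau>) F E"

lemma pmf_run_eq_expect_run:
  "pmf (run A F E (\<lambda>d. inv (E d))) True = expect_run (\<lambda>_ c. of_bool c) A \<tau> F E"
proof (induction A arbitrary: \<tau>)
  case (Coin g)
  then show ?case by (simp add: pmf_bind integral_pmf_of_set UNIV_bool)
qed (simp_all add: pmf_return)

lemma expect_run_const: "expect_run (\<lambda>_ _. r) A \<tau> F E = r"
  by (induction A arbitrary: \<tau>) simp_all

lemma sum_expect_run:
  "(\<Sum>i\<in>I. expect_run (h i) A \<tau> F E) = expect_run (\<lambda>\<tau> c. \<Sum>i\<in>I. h i \<tau> c) A \<tau> F E"
  by (induction A arbitrary: \<tau>) (simp_all add: sum.distrib sum_divide_distrib[symmetric])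

lemma bounded_induct [consumes 3, case_names Out Coin QF QE QD]:
  assumes "bounded A a b" "card (fst \<tau>) + a \<le> qf" "card (snd \<tau>) + b \<le> qe"
    and out: "\<And>c \<tau>. card (fst \<tau>) \<le> qf \<Longrightarrow> card (snd \<tau>) \<le> qe \<Longrightarrow> P (Out c) \<tau>"
    and coin: "\<And>g \<tau>. P (g True) \<tau> \<Longrightarrow> P (g False) \<tau> \<Longrightarrow> P (Coin g) \<tau>"
    and query_f: "\<And>x g \<tau>. (\<And>y. P (g y) (add_f_query x y \<tau>)) \<Longrightarrow> P (QF x g) \<tau>"
    and query_e: "\<And>d X g \<tau>. (\<And>Y. P (g Y) (add_rk_query d X Y \<tau>)) \<Longrightarrow> P (QE d X g) \<tau>"
    and query_d: "\<And>d Y g \<tau>. (\<And>X. P (g X) (add_rk_query d X Y \<tau>)) \<Longrightarrow> P (QD d Y g) \<tau>"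
  shows "P A \<tau>"
  using assms(1-3)
proof (induction A arbitrary: a b \<tau>)
  case (Out c)
  then show ?case by (intro out) auto
next
  case (Coin g)
  then show ?case by (intro coin Coin.IH[OF rangeI]) simp_all
next
  case (QF x g)
  have "card (fst (add_f_query x y \<tau>)) + (a - 1) \<le> qf" for y
    using QF.prems card_insert_le_Suc[of "(x, y)" "fst \<tau>"] by (auto simp: add_f_query_def)
  with QF show ?case by (intro query_f QF.IH) (auto simp: add_f_query_def)
next
  case (QE d X g)
  have "card (snd (add_rk_query d X Y \<tau>)) + (b - 1) \<le> qe" for Y
    using QE.prems card_insert_le_Suc[of "(d, X, Y)" "snd \<tau>"] by (auto simp: add_rk_query_def)
  with QE show ?case by (intro query_e QE.IH) (auto simp: add_rk_query_def)
next
  case (QD d Y g)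
  have "card (snd (add_rk_query d X Y \<tau>)) + (b - 1) \<le> qe" for X
    using QD.prems card_insert_le_Suc[of "(d, X, Y)" "snd \<tau>"] by (auto simp: add_rk_query_def)
  with QD show ?case by (intro query_d QD.IH) (auto simp: add_rk_query_def)
qed

lemma expect_run_le:
  assumes "bounded A qf qe"
    and "\<And>\<tau> c. card (fst \<tau>) \<le> qf \<Longrightarrow> card (snd \<tau>) \<le> qe \<Longrightarrow> h \<tau> c \<le> r"
  shows "expect_run h A ({}, {}) F E \<le> r"
proof -
  have "card (fst ({}, {})) + qf \<le> qf" "card (snd ({}, {})) + qe \<le> qe"
    by simp_all
  with assms(1) show ?thesis
    by (induction rule: bounded_induct) (simp_all add: assms(2))
qed

definition world_sum ::
  "'u set \<Rightarrow> ('u \<Rightarrow> 'a \<Rightarrow> 'a) \<Rightarrow> ('u \<Rightarrow> 'a \<Rightarrow> 'b \<Rightarrow> 'b) \<Rightarrow>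
   ('u \<Rightarrow> ('a, 'b) transcript \<Rightarrow> bool \<Rightarrow> real) \<Rightarrow> ('a, 'b) dist \<Rightarrow> ('a, 'b) transcript \<Rightarrow> real" where
  "world_sum \<Omega> F E h A \<tau> =
     (\<Sum>u | u \<in> \<Omega> \<and> consistent (F u) (E u) \<tau>. expect_run (h u) A \<tau> (F u) (E u))"

lemma world_sum_empty:
  "world_sum \<Omega> F E h A ({}, {}) = (\<Sum>u\<in>\<Omega>. expect_run (h u) A ({}, {}) (F u) (E u))"
  by (simp add: world_sum_def)

lemma world_sum_Out:
  fixes key :: "'u \<Rightarrow> 'k::finite"
  assumes "finite \<Omega>"
  shows "world_sum \<Omega> F E (\<lambda>u. f (key u)) (Out c) \<tau>
    = (\<Sum>k\<in>UNIV. f k \<tau> c * card {u \<in> \<Omega>. consistent (F u) (E u) \<tau> \<and> key u = k})"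
  unfolding world_sum_def expect_run.simps
  using sum_group_by_value[where r = key and f = "\<lambda>_ k. f k \<tau> c"] assms
  by (simp add: mult.commute)

lemma world_sum_Coin:
  "world_sum \<Omega> F E h (Coin g) \<tau> = (world_sum \<Omega> F E h (g True) \<tau> + world_sum \<Omega> F E h (g False) \<tau>) / 2"
  by (simp add: world_sum_def sum.distrib sum_divide_distrib[symmetric])

lemma world_sum_QF:
  fixes F :: "'u \<Rightarrow> 'a::finite \<Rightarrow> 'a"
  assumes "finite \<Omega>"
  shows "world_sum \<Omega> F E h (QF x g) \<tau> = (\<Sum>y\<in>UNIV. world_sum \<Omega> F E h (g y) (add_f_query x y \<tau>))"
  unfolding world_sum_def expect_run.simps
  using sum_group_by_value[where r = "\<lambda>u. F u x"
      and f = "\<lambda>u y. expect_run (h u) (g y) (add_f_query x y \<tau>) (F u) (E u)"] assms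
  by (simp add: conj_assoc)

lemma world_sum_QE:
  fixes E :: "'u \<Rightarrow> 'a \<Rightarrow> 'b::finite \<Rightarrow> 'b"
  assumes "finite \<Omega>"
  shows "world_sum \<Omega> F E h (QE d X g) \<tau> = (\<Sum>Y\<in>UNIV. world_sum \<Omega> F E h (g Y) (add_rk_query d X Y \<tau>))"
  unfolding world_sum_def expect_run.simps
  using sum_group_by_value[where r = "\<lambda>u. E u d X"
      and f = "\<lambda>u Y. expect_run (h u) (g Y) (add_rk_query d X Y \<tau>) (F u) (E u)"] assms
  by (simp add: conj_assoc)

lemma world_sum_QD:
  fixes E :: "'u \<Rightarrow> 'a \<Rightarrow> 'b::finite \<Rightarrow> 'b"
  assumes "finite \<Omega>" and "\<forall>u\<in>\<Omega>. \<forall>d. bij (E u d)"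
  shows "world_sum \<Omega> F E h (QD d Y g) \<tau> = (\<Sum>X\<in>UNIV. world_sum \<Omega> F E h (g X) (add_rk_query d X Y \<tau>))"
proof -
  have "u \<in> \<Omega> \<Longrightarrow> inv (E u d) Y = X \<longleftrightarrow> E u d X = Y" for u X
    using assms(2) bij_inv_eq_iff by metis
  then have "{u. (u \<in> \<Omega> \<and> consistent (F u) (E u) \<tau>) \<and> inv (E u d) Y = X}
      = {u. u \<in> \<Omega> \<and> consistent (F u) (E u) (add_rk_query d X Y \<tau>)}" for X
    by auto
  then show ?thesis
    unfolding world_sum_def expect_run.simps
    using sum_group_by_value[where r = "\<lambda>u. inv (E u d) Y"
        and f = "\<lambda>u X. expect_run (h u) (g X) (add_rk_query d X Y \<tau>) (F u) (E u)"] assms(1)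
    by simp
qed

text \<open>A real or ideal world \<open>u\<close> carries its oracles and the key revealed at the end;
  \<open>good_ratio\<close> is the H-coefficient condition on good transcripts.\<close>

context
  fixes \<Omega>R :: "'r set" and FR :: "'r \<Rightarrow> 'a::finite \<Rightarrow> 'a" and ER :: "'r \<Rightarrow> 'a \<Rightarrow> 'b::finite \<Rightarrow> 'b"
    and \<Omega>I :: "'i set" and FI :: "'i \<Rightarrow> 'a \<Rightarrow> 'a" and EI :: "'i \<Rightarrow> 'a \<Rightarrow> 'b \<Rightarrow> 'b"
    and keyR :: "'r \<Rightarrow> 'k::finite" and keyI :: "'i \<Rightarrow> 'k"
    and good :: "('a, 'b) transcript \<Rightarrow> 'k \<Rightarrow> bool" and \<epsilon> :: real and qf qe :: nat
  assumes finite_worlds: "finite \<Omega>R" "finite \<Omega>I"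
    and bij_worlds: "\<forall>u\<in>\<Omega>R. \<forall>d. bij (ER u d)" "\<forall>u\<in>\<Omega>I. \<forall>d. bij (EI u d)"
    and \<epsilon>_nonneg: "0 \<le> \<epsilon>"
    and good_ratio: "\<And>\<tau> k. card (fst \<tau>) \<le> qf \<Longrightarrow> card (snd \<tau>) \<le> qe \<Longrightarrow> good \<tau> k \<Longrightarrow>
       (1 - \<epsilon>) * card {u \<in> \<Omega>I. consistent (FI u) (EI u) \<tau> \<and> keyI u = k} / card \<Omega>I
       \<le> card {u \<in> \<Omega>R. consistent (FR u) (ER u) \<tau> \<and> keyR u = k} / card \<Omega>R"
begin

lemma h_coefficient_invariant:
  assumes "bounded A a b" "card (fst \<tau>) + a \<le> qf" "card (snd \<tau>) + b \<le> qe"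
  shows "world_sum \<Omega>I FI EI (\<lambda>_ _ c. of_bool c) A \<tau> / card \<Omega>I
       - world_sum \<Omega>R FR ER (\<lambda>_ _ c. of_bool c) A \<tau> / card \<Omega>R
     \<le> \<epsilon> * world_sum \<Omega>I FI EI (\<lambda>_ _ _. 1) A \<tau> / card \<Omega>I
       + world_sum \<Omega>I FI EI (\<lambda>u \<tau> _. of_bool (\<not> good \<tau> (keyI u))) A \<tau> / card \<Omega>I"
proof -
  define \<Phi> where "\<Phi> A \<tau> =
      world_sum \<Omega>I FI EI (\<lambda>_ _ c. of_bool c) A \<tau> / card \<Omega>I
    - world_sum \<Omega>R FR ER (\<lambda>_ _ c. of_bool c) A \<tau> / card \<Omega>R
    - \<epsilon> * world_sum \<Omega>I FI EI (\<lambda>_ _ _. 1) A \<tau> / card \<Omega>I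
    - world_sum \<Omega>I FI EI (\<lambda>u \<tau> _. of_bool (\<not> good \<tau> (keyI u))) A \<tau> / card \<Omega>I" for A \<tau>
  have "\<Phi> A \<tau> \<le> 0"
    using assms
  proof (induction rule: bounded_induct)
    case (Out c \<tau>)
    define nI where "nI k = real (card {u \<in> \<Omega>I. consistent (FI u) (EI u) \<tau> \<and> keyI u = k})" for k
    define nR where "nR k = real (card {u \<in> \<Omega>R. consistent (FR u) (ER u) \<tau> \<and> keyR u = k})" for k
    have "of_bool c * nI k / card \<Omega>I - of_bool c * nR k / card \<Omega>R - \<epsilon> * nI k / card \<Omega>I
        - of_bool (\<not> good \<tau> k) * nI k / card \<Omega>I \<le> 0" for k
    proof (cases "c \<and> good \<tau> k")
      case True
      have "(1 - \<epsilon>) * nI k / card \<Omega>I \<le> nR k / card \<Omega>R"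
        using good_ratio[OF Out True[THEN conjunct2]] by (simp add: nI_def nR_def)
      then show ?thesis using True by (simp add: left_diff_distrib diff_divide_distrib)
    next
      case False
      have "0 \<le> \<epsilon> * nI k / card \<Omega>I" "0 \<le> nI k / card \<Omega>I" "0 \<le> nR k / card \<Omega>R"
        using \<epsilon>_nonneg by (simp_all add: nI_def nR_def)
      with False show ?thesis by (cases c) auto
    qed
    moreover have "\<Phi> (Out c) \<tau> = (\<Sum>k\<in>UNIV. of_bool c * nI k / card \<Omega>I - of_bool c * nR k / card \<Omega>R
        - \<epsilon> * nI k / card \<Omega>I - of_bool (\<not> good \<tau> k) * nI k / card \<Omega>I)"
      unfolding \<Phi>_def world_sum_Out[OF finite_worlds(1), where key = keyR and f = "\<lambda>_ _ c. of_bool c"]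
        world_sum_Out[OF finite_worlds(2), where key = keyI and f = "\<lambda>_ _ c. of_bool c"]
        world_sum_Out[OF finite_worlds(2), where key = keyI and f = "\<lambda>_ _ _. 1"]
        world_sum_Out[OF finite_worlds(2), where key = keyI and f = "\<lambda>k \<tau> _. of_bool (\<not> good \<tau> k)"]
        nI_def[symmetric] nR_def[symmetric]
      by (simp only: sum_subtractf sum_divide_distrib sum_distrib_left mult_1 times_divide_eq_right)
    ultimately show ?case by (simp add: sum_nonpos)
  next
    case (Coin g \<tau>)
    moreover have "\<Phi> (Coin g) \<tau> = (\<Phi> (g True) \<tau> + \<Phi> (g False) \<tau>) / 2"
      unfolding \<Phi>_def world_sum_Coin by (simp add: add_divide_distrib diff_divide_distrib algebra_simps)
    ultimately show ?case by simp
  next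
    case (QF x g \<tau>)
    have "\<Phi> (QF x g) \<tau> = (\<Sum>y\<in>UNIV. \<Phi> (g y) (add_f_query x y \<tau>))"
      unfolding \<Phi>_def world_sum_QF[OF finite_worlds(1)] world_sum_QF[OF finite_worlds(2)]
      by (simp only: sum_subtractf sum_divide_distrib sum_distrib_left times_divide_eq_right)
    with QF.IH show ?case by (simp add: sum_nonpos)
  next
    case (QE d X g \<tau>)
    have "\<Phi> (QE d X g) \<tau> = (\<Sum>y\<in>UNIV. \<Phi> (g y) (add_rk_query d X y \<tau>))"
      unfolding \<Phi>_def world_sum_QE[OF finite_worlds(1)] world_sum_QE[OF finite_worlds(2)]
      by (simp only: sum_subtractf sum_divide_distrib sum_distrib_left times_divide_eq_right)
    with QE.IH show ?case by (simp add: sum_nonpos)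
  next
    case (QD d Y g \<tau>)
    have "\<Phi> (QD d Y g) \<tau> = (\<Sum>y\<in>UNIV. \<Phi> (g y) (add_rk_query d y Y \<tau>))"
      unfolding \<Phi>_def world_sum_QD[OF finite_worlds(1) bij_worlds(1)]
        world_sum_QD[OF finite_worlds(2) bij_worlds(2)]
      by (simp only: sum_subtractf sum_divide_distrib sum_distrib_left times_divide_eq_right)
    with QD.IH show ?case by (simp add: sum_nonpos)
  qed
  then show ?thesis by (simp add: \<Phi>_def)
qed

lemma h_coefficient:
  assumes "bounded A qf qe"
  shows "(\<Sum>u\<in>\<Omega>I. pmf (run A (FI u) (EI u) (\<lambda>d. inv (EI u d))) True) / card \<Omega>I
       - (\<Sum>u\<in>\<Omega>R. pmf (run A (FR u) (ER u) (\<lambda>d. inv (ER u d))) True) / card \<Omega>R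
     \<le> \<epsilon> + (\<Sum>u\<in>\<Omega>I. expect_run (\<lambda>\<tau> _. of_bool (\<not> good \<tau> (keyI u))) A ({}, {}) (FI u) (EI u))
           / card \<Omega>I"
proof -
  have "\<epsilon> * world_sum \<Omega>I FI EI (\<lambda>_ _ _. 1) A ({}, {}) / card \<Omega>I \<le> \<epsilon>"
    using \<epsilon>_nonneg by (cases "card \<Omega>I = 0") (simp_all add: world_sum_empty expect_run_const)
  then show ?thesis
    using h_coefficient_invariant[OF assms, of "({}, {})"]
    by (simp add: world_sum_empty pmf_run_eq_expect_run[where \<tau> = "({}, {})"])
qed

end


section \<open>Counting ideal ciphers\<close>

definition ideal_ciphers :: "('k \<Rightarrow> 'b \<Rightarrow> 'b) set" where
  "ideal_ciphers = {IC. \<forall>key. bij (IC key)}"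

definition ciphers_extending :: "('k \<times> 'b \<times> 'b) set \<Rightarrow> ('k \<Rightarrow> 'b \<Rightarrow> 'b) set" where
  "ciphers_extending T = {IC \<in> ideal_ciphers. \<forall>(d, X, Y) \<in> T. IC d X = Y}"

definition rk_injective :: "('k \<times> 'b \<times> 'b) set \<Rightarrow> bool" where
  "rk_injective T \<longleftrightarrow> (\<forall>d X Y X' Y'. (d, X, Y) \<in> T \<longrightarrow> (d, X', Y') \<in> T \<longrightarrow> (X = X' \<longleftrightarrow> Y = Y'))"

lemma bij_if_ideal_cipher: "IC \<in> ideal_ciphers \<Longrightarrow> bij (IC key)"
  by (simp add: ideal_ciphers_def)

lemma id_in_ideal_ciphers: "(\<lambda>_. id) \<in> ideal_ciphers"
  by (simp add: ideal_ciphers_def)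

lemma bij_betw_comp_ideal_ciphers:
  assumes "bij \<pi>"
  shows "bij_betw (\<lambda>IC. IC \<circ> \<pi>) ideal_ciphers ideal_ciphers"
proof (rule bij_betw_byWitness[where f' = "\<lambda>IC. IC \<circ> inv \<pi>"])
  have "\<pi> \<circ> inv \<pi> = id" "inv \<pi> \<circ> \<pi> = id"
    using assms by (simp_all add: bij_is_surj bij_is_inj flip: surj_iff inj_iff)
  then show "\<forall>IC\<in>ideal_ciphers. IC \<circ> \<pi> \<circ> inv \<pi> = IC" "\<forall>IC\<in>ideal_ciphers. IC \<circ> inv \<pi> \<circ> \<pi> = IC"
    by (simp_all add: comp_assoc)
qed (auto simp: ideal_ciphers_def)

lemma card_ciphers_extending_comp:
  assumes "bij \<pi>"
  shows "card {IC \<in> ideal_ciphers. IC \<circ> \<pi> \<in> ciphers_extending T} = card (ciphers_extending T)"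
proof -
  have bij: "bij_betw (\<lambda>IC. IC \<circ> \<pi>) ideal_ciphers ideal_ciphers"
    using assms by (rule bij_betw_comp_ideal_ciphers)
  have image: "(\<lambda>IC. IC \<circ> \<pi>) ` {IC \<in> ideal_ciphers. IC \<circ> \<pi> \<in> ciphers_extending T}
      = ciphers_extending T"
  proof (intro equalityI subsetI)
    fix IC' assume "IC' \<in> ciphers_extending T"
    moreover from this obtain IC where "IC \<in> ideal_ciphers" "IC' = IC \<circ> \<pi>"
      using bij unfolding bij_betw_def ciphers_extending_def by blast
    ultimately show "IC' \<in> (\<lambda>IC. IC \<circ> \<pi>) ` {IC \<in> ideal_ciphers. IC \<circ> \<pi> \<in> ciphers_extending T}"
      by blast
  qed auto
  have "bij_betw (\<lambda>IC. IC \<circ> \<pi>) {IC \<in> ideal_ciphers. IC \<circ> \<pi> \<in> ciphers_extending T} (ciphers_extending T)"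
    by (rule bij_betw_subset[OF bij _ image]) auto
  then show ?thesis
    by (rule bij_betw_same_card)
qed

lemma rk_injective_if_extending:
  assumes "IC \<in> ciphers_extending T"
  shows "rk_injective T"
proof -
  have "inj (IC d)" for d
    using assms by (simp add: ciphers_extending_def ideal_ciphers_def bij_is_inj)
  moreover have "IC d X = Y" if "(d, X, Y) \<in> T" for d X Y
    using assms that by (auto simp: ciphers_extending_def)
  ultimately show ?thesis
    unfolding rk_injective_def by (metis injD)
qed

lemma card_ciphers_extending_insert:
  fixes T :: "('k::finite \<times> 'b::finite \<times> 'b) set"
  assumes "(d, X, Y) \<notin> T"
  shows "card (ciphers_extending (insert (d, X, Y) T)) * (CARD('b) - card T)
    \<le> card (ciphers_extending T)"
proof (cases "\<exists>X' Y'. (d, X', Y') \<in> T \<and> (X' = X \<or> Y' = Y)")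
  case True
  then obtain X' Y' where t': "(d, X', Y') \<in> T" "X' = X \<or> Y' = Y" by blast
  have "IC \<notin> ciphers_extending (insert (d, X, Y) T)" for IC
  proof
    assume "IC \<in> ciphers_extending (insert (d, X, Y) T)"
    then have "IC d X = Y" "IC d X' = Y'" "inj (IC d)"
      using t'(1) by (auto simp: ciphers_extending_def ideal_ciphers_def bij_is_inj)
    with t' assms show False by (metis injD)
  qed
  then have "ciphers_extending (insert (d, X, Y) T) = {}" by blast
  then show ?thesis by simp
next
  case False
  define used where "used = {Y'. \<exists>X'. (d, X', Y') \<in> T}"
  define C where "C Z = {IC \<in> ciphers_extending T. IC d X = Z}" for Z
  have C_Y: "C Y = ciphers_extending (insert (d, X, Y) T)"
    by (auto simp: C_def ciphers_extending_def)
  have "card used \<le> card T"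
  proof -
    have "used \<subseteq> (\<lambda>(_, _, Y'). Y') ` T" by (force simp: used_def)
    then have "card used \<le> card ((\<lambda>(_, _, Y'). Y') ` T)" by (intro card_mono) auto
    also have "\<dots> \<le> card T" by (rule card_image_le) simp
    finally show ?thesis .
  qed
  then have card_unused: "CARD('b) - card T \<le> card (UNIV - used)"
    by (simp add: card_Diff_subset)
  have "card (C Y) \<le> card (C Z)" if "Z \<notin> used" for Z
  proof -
    \<comment> \<open>Swapping \<open>Y\<close> and \<open>Z\<close> after \<open>IC d\<close> keeps every entry of \<open>T\<close>, whose outputs under \<open>d\<close> lie in \<open>used\<close>.\<close>
    define \<sigma> where "\<sigma> IC = IC(d := Transposition.transpose Y Z \<circ> IC d)" for IC :: "'k \<Rightarrow> 'b \<Rightarrow> 'b"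
    have "\<sigma> (\<sigma> IC) = IC" for IC
      by (simp add: \<sigma>_def fun_eq_iff)
    then have "inj_on \<sigma> (C Y)"
      by (metis inj_on_inverseI)
    moreover have "\<sigma> ` C Y \<subseteq> C Z"
    proof
      fix IC' assume "IC' \<in> \<sigma> ` C Y"
      then obtain IC where IC: "IC \<in> C Y" and IC': "IC' = \<sigma> IC" by blast
      have "Y \<notin> used" using False by (auto simp: used_def)
      have "IC' d' X' = Y'" if "(d', X', Y') \<in> T" for d' X' Y'
      proof (cases "d' = d")
        case True
        then have "Y' \<noteq> Y" "Y' \<noteq> Z"
          using that \<open>Y \<notin> used\<close> \<open>Z \<notin> used\<close> by (auto simp: used_def)
        moreover have "IC d X' = Y'"
          using IC that True by (auto simp: C_def ciphers_extending_def)
        ultimately show ?thesis using True by (simp add: IC' \<sigma>_def)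
      next
        case False
        then show ?thesis using IC that by (auto simp: IC' \<sigma>_def C_def ciphers_extending_def)
      qed
      moreover have "bij (IC' key)" for key
        using IC unfolding IC' \<sigma>_def C_def ciphers_extending_def ideal_ciphers_def
        by (auto intro: bij_comp)
      ultimately show "IC' \<in> C Z"
        using IC unfolding IC' C_def ciphers_extending_def ideal_ciphers_def \<sigma>_def by auto
    qed
    ultimately show ?thesis
      by (meson card_inj_on_le finite)
  qed
  then have "card (C Y) * card (UNIV - used) \<le> (\<Sum>Z\<in>UNIV - used. card (C Z))"
    using sum_mono[of "UNIV - used" "\<lambda>_. card (C Y)" "\<lambda>Z. card (C Z)"] by (simp add: mult.commute)
  also have "\<dots> \<le> (\<Sum>Z\<in>UNIV. card (C Z))"
    by (intro sum_mono2) auto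
  also have "\<dots> = card (ciphers_extending T)"
    unfolding C_def using sum.group[of "ciphers_extending T" UNIV "\<lambda>IC. IC d X" "\<lambda>_. 1::nat"]
    by simp
  finally have "card (C Y) * card (UNIV - used) \<le> card (ciphers_extending T)" .
  then show ?thesis
    using card_unused C_Y by (metis le_trans mult_le_mono2)
qed

lemma card_ciphers_extending:
  fixes T :: "('k::finite \<times> 'b::finite \<times> 'b) set"
  shows "card (ciphers_extending T) * (\<Prod>i<card T. CARD('b) - i)
    \<le> card (ideal_ciphers :: ('k \<Rightarrow> 'b \<Rightarrow> 'b) set)"
  using finite[of T]
proof (induction T rule: finite_induct)
  case empty
  then show ?case by (simp add: ciphers_extending_def)
next
  case (insert t T)
  obtain d X Y where t: "t = (d, X, Y)" by (cases t)
  have "card (ciphers_extending (insert t T)) * (\<Prod>i<card (insert t T). CARD('b) - i)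
      = card (ciphers_extending (insert (d, X, Y) T)) * (CARD('b) - card T) * (\<Prod>i<card T. CARD('b) - i)"
    using insert t by (simp add: prod.lessThan_Suc mult_ac)
  also have "\<dots> \<le> card (ciphers_extending T) * (\<Prod>i<card T. CARD('b) - i)"
    using card_ciphers_extending_insert insert t by (intro mult_le_mono1) simp
  also have "\<dots> \<le> card (ideal_ciphers :: ('k \<Rightarrow> 'b \<Rightarrow> 'b) set)"
    by (rule insert.IH)
  finally show ?case .
qed


lemma card_ciphers_extending_ge:
  fixes T :: "('k::finite \<times> 'b::finite \<times> 'b) set"
  assumes "card T \<le> CARD('b)"
  shows "real CARD('b) ^ card T * (1 - real (card T) ^ 2 / CARD('b)) * card (ciphers_extending T)
    \<le> card (ideal_ciphers :: ('k \<Rightarrow> 'b \<Rightarrow> 'b) set)"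
proof -
  have "real CARD('b) ^ card T * (1 - real (card T) ^ 2 / CARD('b)) * card (ciphers_extending T)
      \<le> real (\<Prod>i<card T. CARD('b) - i) * card (ciphers_extending T)"
    using falling_prod_ge[OF assms] by (rule mult_right_mono) simp
  also have "\<dots> \<le> card (ideal_ciphers :: ('k \<Rightarrow> 'b \<Rightarrow> 'b) set)"
    using card_ciphers_extending[of T] by (simp only: mult.commute of_nat_le_iff flip: of_nat_mult)
  finally show ?thesis .
qed


section \<open>Counting functions with prescribed values\<close>

definition extensions :: "('a \<times> 'b) set \<Rightarrow> ('a \<Rightarrow> 'b) set" where
  "extensions Q = {F. \<forall>(x, y) \<in> Q. F x = y}"

lemma consistent_iff_extensions:
  "consistent F E \<tau> \<longleftrightarrow> F \<in> extensions (fst \<tau>) \<and> (\<forall>(d, X, Y) \<in> snd \<tau>. E d X = Y)"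
  by (simp add: consistent_def extensions_def)

lemma extensions_Un: "extensions (Q \<union> Q') = extensions Q \<inter> extensions Q'"
  by (auto simp: extensions_def ball_Un)

lemma inj_on_fst_if_extensions:
  assumes "F \<in> extensions Q"
  shows "inj_on fst Q"
proof (rule inj_onI)
  fix p q assume "p \<in> Q" "q \<in> Q" "fst p = fst q"
  moreover have "\<forall>p \<in> Q. F (fst p) = snd p" using assms by (auto simp: extensions_def)
  ultimately show "p = q" by (metis prod_eqI)
qed

lemma card_extensions:
  fixes Q :: "('a::finite \<times> 'b::finite) set"
  assumes "inj_on fst Q"
  shows "card (extensions Q) = CARD('b) ^ (CARD('a) - card Q)"
proof -
  define B where "B x = (if x \<in> fst ` Q then {y. (x, y) \<in> Q} else UNIV)" for x
  have "extensions Q = Pi\<^sub>E UNIV B"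
    using assms by (force simp: extensions_def B_def PiE_UNIV_domain Pi_def inj_on_def)
  moreover have "card (B x) = (if x \<in> fst ` Q then 1 else CARD('b))" for x
  proof (cases "x \<in> fst ` Q")
    case True
    then obtain y where "(x, y) \<in> Q" by force
    with assms have "{y. (x, y) \<in> Q} = {y}" by (force simp: inj_on_def)
    with True show ?thesis by (simp add: B_def)
  qed (simp add: B_def)
  ultimately have "card (extensions Q) = CARD('b) ^ card (- fst ` Q)"
    by (simp add: card_PiE prod.If_cases Compl_eq_Diff_UNIV)
  also have "card (- fst ` Q) = CARD('a) - card Q"
    using card_image[OF assms] by (simp add: Compl_eq_Diff_UNIV card_Diff_subset)
  finally show ?thesis .
qed

lemma card_extensions_point:
  fixes Q :: "('a::finite \<times> 'b::finite) set"
  assumes "inj_on fst Q" and "x \<notin> fst ` Q"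
  shows "card {F \<in> extensions Q. F x = y} * CARD('b) = card (extensions Q)"
proof -
  have "{F \<in> extensions Q. F x = y} = extensions (insert (x, y) Q)"
    by (auto simp: extensions_def)
  moreover have "inj_on fst (insert (x, y) Q)" and "(x, y) \<notin> Q"
    using assms by force+
  moreover have "card (insert (x, y) Q) \<le> CARD('a)"
    using card_image[OF \<open>inj_on fst (insert (x, y) Q)\<close>] card_mono[of UNIV "fst ` insert (x, y) Q"]
    by simp
  moreover have "CARD('a) - card Q = Suc (CARD('a) - card (insert (x, y) Q))"
    using calculation assms(1) by (simp add: card_insert_if)
  ultimately show ?thesis
    using assms by (simp add: card_extensions)
qed

lemma card_extensions_relation:
  fixes Q :: "('a::finite \<times> 'b::finite) set"
  assumes "inj_on fst Q" and "x \<notin> fst ` Q" and "x' \<notin> fst ` Q" and "x \<noteq> x'"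
  shows "card {F \<in> extensions Q. F x = h (F x')} * CARD('b) = card (extensions Q)"
proof -
  have "card {F \<in> extensions Q. F x = h (F x')}
      = (\<Sum>z\<in>UNIV. card {F \<in> {F \<in> extensions Q. F x = h (F x')}. F x' = z})"
    using sum.group[of "{F \<in> extensions Q. F x = h (F x')}" UNIV "\<lambda>F. F x'" "\<lambda>_. 1::nat"] by simp
  also have "\<dots> = (\<Sum>z\<in>UNIV. card {F \<in> extensions (insert (x', z) Q). F x = h z})"
    by (intro sum.cong refl arg_cong[where f = card]) (auto simp: extensions_def)
  finally have "card {F \<in> extensions Q. F x = h (F x')} * CARD('b)
      = (\<Sum>z\<in>UNIV. card {F \<in> extensions (insert (x', z) Q). F x = h z} * CARD('b))"
    by (simp add: sum_distrib_right)
  also have "\<dots> = (\<Sum>z\<in>UNIV. card (extensions (insert (x', z) Q)))"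
    using assms by (intro sum.cong refl card_extensions_point) auto
  also have "\<dots> = (\<Sum>z\<in>UNIV. card {F \<in> extensions Q. F x' = z})"
    by (intro sum.cong refl arg_cong[where f = card]) (auto simp: extensions_def)
  also have "\<dots> = card (extensions Q)"
    using sum.group[of "extensions Q" UNIV "\<lambda>F. F x'" "\<lambda>_. 1::nat"] by simp
  finally show ?thesis .
qed


lemma card_extensions_Un:
  fixes Q Q' :: "('a::finite \<times> 'b::finite) set"
  assumes "inj_on fst (Q \<union> Q')" and "fst ` Q \<inter> fst ` Q' = {}"
  shows "card (extensions (Q \<union> Q')) * CARD('b) ^ card Q' = card (extensions Q)"
proof -
  have "Q \<inter> Q' = {}" using assms(2) by auto
  then have "card (Q \<union> Q') = card Q + card Q'" by (simp add: card_Un_disjoint)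
  moreover have "card (Q \<union> Q') \<le> CARD('a)"
    using card_image[OF assms(1)] card_mono[of UNIV "fst ` (Q \<union> Q')"] by simp
  moreover have "inj_on fst Q" using assms(1) by (rule inj_on_subset) simp
  ultimately show ?thesis
    using assms(1) by (simp add: card_extensions flip: power_add)
qed


section \<open>The four-round cipher\<close>

lemma xor_left_inj: "xor a x = xor a y \<longleftrightarrow> x = y"
  for a x y :: "'a::ring_bit_operations"
  by (metis bit.xor_left_self)

lemma xor_right_inj: "xor x a = xor y a \<longleftrightarrow> x = y"
  for a x y :: "'a::ring_bit_operations"
  by (metis xor_left_inj xor.commute)

lemma xor_eq_iff: "xor a x = y \<longleftrightarrow> x = xor a y"
  for a x y :: "'a::ring_bit_operations"
  by auto

lemma xor_right_eq_iff: "xor x a = y \<longleftrightarrow> x = xor y a"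
  for a x y :: "'a::ring_bit_operations"
  by (metis bit.xor_left_self xor.commute)

lemma xor_eq_xor_iff: "xor a x = xor b y \<longleftrightarrow> x = xor (xor a b) y"
  for a b x y :: "'a::ring_bit_operations"
  by (auto simp: xor_eq_iff xor.assoc)

lemma xor_eq_xor_swap: "xor a b = xor c d \<longleftrightarrow> xor a c = xor b d"
  for a b c d :: "'a::ring_bit_operations"
  by (auto simp: xor_eq_xor_iff xor.assoc xor.left_commute)

lemmas xor_ac = xor.assoc xor.commute xor.left_commute

lemma card_le_if_prk_le:
  fixes P :: "'n::len word \<Rightarrow> bool"
  assumes "prk P \<le> \<delta>"
  shows "real (card {k. P k}) \<le> \<delta> * CARD('n word)"
  using assms by (simp add: prk_def divide_le_eq)

lemma bij_xor: "bij (xor k)"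
  for k :: "'a::ring_bit_operations"
  by (rule o_bij[of "xor k"]) (simp_all add: fun_eq_iff)

lemma collision_budget:
  fixes N :: real and p qf c qe :: nat
  assumes "1 \<le> N" and "p \<le> qf" and "c \<le> qe" and "(2 * real qe * qf + 7 * real qe ^ 2) / N < 1"
  shows "real c \<le> N ^ 2"
    and "(2 * real c * p + 6 * real c ^ 2) / N + real c ^ 2 / N ^ 2 \<le> (2 * real qe * qf + 7 * real qe ^ 2) / N"
proof -
  have "2 * real qe * qf + 7 * real qe ^ 2 < N"
    using assms(1,4) by (simp add: divide_less_eq)
  moreover have "0 \<le> 2 * real qe * qf" "0 \<le> real qe ^ 2" by simp_all
  ultimately have "real qe ^ 2 < N" by linarith
  moreover have "c \<le> qe * qe" using assms(3) le_square[of qe] by linarith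
  then have "real c \<le> real qe ^ 2" by (simp add: power2_eq_square flip: of_nat_mult)
  moreover have "N \<le> N ^ 2" using assms(1) by (simp add: power2_eq_square)
  ultimately show "real c \<le> N ^ 2" by linarith
  have "real c ^ 2 / N ^ 2 \<le> real c ^ 2 / N"
    using assms(1) by (intro divide_left_mono) (auto simp: power2_eq_square)
  moreover have "2 * real c * p + 7 * real c ^ 2 \<le> 2 * real qe * qf + 7 * real qe ^ 2"
    using assms(2,3) by (intro add_mono mult_mono mult_left_mono power_mono) auto
  then have "(2 * real c * p + 7 * real c ^ 2) / N \<le> (2 * real qe * qf + 7 * real qe ^ 2) / N"
    using assms(1) by (intro divide_right_mono) auto
  moreover have "(2 * real c * p + 6 * real c ^ 2) / N + real c ^ 2 / N = (2 * real c * p + 7 * real c ^ 2) / N"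
    using assms(1) by (simp add: field_simps)
  ultimately show "(2 * real c * p + 6 * real c ^ 2) / N + real c ^ 2 / N ^ 2
      \<le> (2 * real qe * qf + 7 * real qe ^ 2) / N"
    by linarith
qed

type_synonym 'n block = "'n word \<times> 'n word"
type_synonym 'n rk_query = "'n word \<times> 'n block \<times> 'n block"

locale key_schedule =
  fixes w0 w1 w2 w3 g1 g2 g3 g4 :: "'n::len word \<Rightarrow> 'n word"
begin

abbreviation KAF :: "('n word \<Rightarrow> 'n word) \<Rightarrow> 'n word \<Rightarrow> 'n block \<Rightarrow> 'n block" where
  "KAF F \<equiv> KAFw F w0 w1 w2 w3 [g1, g2, g3, g4]"

definition \<phi>1 :: "'n word \<Rightarrow> 'n word" where "\<phi>1 \<kappa> = xor (w1 \<kappa>) (g1 \<kappa>)"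
definition \<phi>4 :: "'n word \<Rightarrow> 'n word" where "\<phi>4 \<kappa> = xor (w2 \<kappa>) (g4 \<kappa>)"

text \<open>For a related-key query \<open>(\<Delta>, (L, R), (S, U))\<close> answered under the cipher key
  \<open>\<kappa> = k \<oplus> \<Delta>\<close>, \<open>u\<^sub>i\<close> is the input to \<open>F\<close> in round \<open>i\<close> and \<open>v\<^sub>i\<close> the value that \<open>F\<close> must take
  there for the query to be answered correctly; \<open>c\<^sub>i\<close> and \<open>e\<^sub>i\<close> are the parts of \<open>u\<^sub>i\<close> and \<open>v\<^sub>i\<close>
  not involving \<open>F\<close>.\<close>

fun u1 :: "'n word \<Rightarrow> 'n rk_query \<Rightarrow> 'n word" where
  "u1 k (\<Delta>, (L, R), S, U) = xor (\<phi>1 (xor k \<Delta>)) R"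

fun u4 :: "'n word \<Rightarrow> 'n rk_query \<Rightarrow> 'n word" where
  "u4 k (\<Delta>, (L, R), S, U) = xor (\<phi>4 (xor k \<Delta>)) S"

fun c2 :: "'n word \<Rightarrow> 'n rk_query \<Rightarrow> 'n word" where
  "c2 k (\<Delta>, (L, R), S, U) = xor (g2 (xor k \<Delta>)) (xor (w0 (xor k \<Delta>)) L)"

fun c3 :: "'n word \<Rightarrow> 'n rk_query \<Rightarrow> 'n word" where
  "c3 k (\<Delta>, (L, R), S, U) = xor (g3 (xor k \<Delta>)) (xor (w3 (xor k \<Delta>)) U)"

fun e2 :: "'n word \<Rightarrow> 'n rk_query \<Rightarrow> 'n word" where
  "e2 k (\<Delta>, (L, R), S, U) = xor (xor (w1 (xor k \<Delta>)) R) (xor (w3 (xor k \<Delta>)) U)"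

fun e3 :: "'n word \<Rightarrow> 'n rk_query \<Rightarrow> 'n word" where
  "e3 k (\<Delta>, (L, R), S, U) = xor (xor (w0 (xor k \<Delta>)) L) (xor (w2 (xor k \<Delta>)) S)"

definition u2 :: "'n word \<Rightarrow> ('n word \<Rightarrow> 'n word) \<Rightarrow> 'n rk_query \<Rightarrow> 'n word" where
  "u2 k F t = xor (c2 k t) (F (u1 k t))"

definition u3 :: "'n word \<Rightarrow> ('n word \<Rightarrow> 'n word) \<Rightarrow> 'n rk_query \<Rightarrow> 'n word" where
  "u3 k F t = xor (c3 k t) (F (u4 k t))"

definition v2 :: "'n word \<Rightarrow> ('n word \<Rightarrow> 'n word) \<Rightarrow> 'n rk_query \<Rightarrow> 'n word" where
  "v2 k F t = xor (e2 k t) (F (u4 k t))"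

definition v3 :: "'n word \<Rightarrow> ('n word \<Rightarrow> 'n word) \<Rightarrow> 'n rk_query \<Rightarrow> 'n word" where
  "v3 k F t = xor (e3 k t) (F (u1 k t))"

lemma bij_KAF: "bij (KAF F \<kappa>)"
proof -
  have bij_xor2: "bij (xor2 c)" for c :: "'n block"
    by (rule o_bij[of "xor2 c"]) (auto simp: fun_eq_iff xor2_def)
  have bij_Psi: "bij (Psi F \<kappa>')" for \<kappa>'
    by (rule o_bij[of "\<lambda>(A, B). (xor B (F (xor \<kappa>' A)), A)"])
      (auto simp: fun_eq_iff Psi_def xor.assoc)
  have "KAF F \<kappa> = xor2 (w2 \<kappa>, w3 \<kappa>) \<circ> Psi F (g4 \<kappa>) \<circ> Psi F (g3 \<kappa>) \<circ> Psi F (g2 \<kappa>)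
      \<circ> Psi F (g1 \<kappa>) \<circ> xor2 (w0 \<kappa>, w1 \<kappa>)"
    by (simp add: fun_eq_iff KAFw_def)
  then show ?thesis
    by (simp add: bij_comp bij_xor2 bij_Psi)
qed

lemma KAF_eq_if_middle_rounds_match:
  assumes "t = (\<Delta>, (L, R), S, U)" and "F (u2 k F t) = v2 k F t" and "F (u3 k F t) = v3 k F t"
  shows "KAF F (xor k \<Delta>) (L, R) = (S, U)"
proof -
  \<comment> \<open>\<open>A\<^sub>i\<close> is the \<open>i\<close>-th half of the Feistel state: round \<open>i\<close> maps \<open>(A\<^sub>i\<^sub>-\<^sub>1, A\<^sub>i)\<close> to \<open>(A\<^sub>i, A\<^sub>i\<^sub>+\<^sub>1)\<close>.\<close>
  define \<kappa> where "\<kappa> = xor k \<Delta>"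
  define A0 A1 where "A0 = xor (w0 \<kappa>) L" and "A1 = xor (w1 \<kappa>) R"
  define A2 where "A2 = xor A0 (F (u1 k t))"
  define A3 where "A3 = xor A1 (F (u2 k F t))"
  define A4 where "A4 = xor A2 (F (u3 k F t))"
  have "Psi F (g1 \<kappa>) (A0, A1) = (A1, A2)"
    by (simp add: Psi_def A1_def A2_def assms(1) \<kappa>_def \<phi>1_def xor_ac)
  moreover have "Psi F (g2 \<kappa>) (A1, A2) = (A2, A3)"
    by (simp add: Psi_def A0_def A2_def A3_def u2_def assms(1) \<kappa>_def xor_ac)
  moreover have A3: "A3 = xor (xor (w3 \<kappa>) U) (F (u4 k t))"
    using assms(2) by (simp add: A1_def A3_def v2_def assms(1) \<kappa>_def xor_ac)
  then have "Psi F (g3 \<kappa>) (A2, A3) = (A3, A4)"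
    by (simp add: Psi_def A4_def u3_def assms(1) \<kappa>_def xor_ac)
  moreover have A4: "A4 = xor (w2 \<kappa>) S"
    using assms(3) by (simp add: A0_def A2_def A4_def v3_def assms(1) \<kappa>_def xor_ac)
  then have "Psi F (g4 \<kappa>) (A3, A4) = (A4, xor (w3 \<kappa>) U)"
    using A3 by (simp add: Psi_def assms(1) \<kappa>_def \<phi>4_def xor_ac)
  ultimately show ?thesis
    using A4 by (simp add: KAFw_def xor2_def A0_def A1_def \<kappa>_def)
qed

definition good_key :: "'n word \<Rightarrow> ('n word \<times> 'n word) set \<Rightarrow> 'n rk_query set \<Rightarrow> bool" where
  "good_key k P T \<longleftrightarrow>
     (\<forall>t\<in>T. u1 k t \<notin> fst ` P \<and> u4 k t \<notin> fst ` P) \<and>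
     (\<forall>t\<in>T. \<forall>t'\<in>T. fst t \<noteq> fst t' \<longrightarrow> u1 k t \<noteq> u1 k t' \<and> u4 k t \<noteq> u4 k t') \<and>
     (\<forall>t\<in>T. \<forall>t'\<in>T. u1 k t \<noteq> u4 k t')"

context
  fixes \<delta>1 \<delta>2 \<delta>3 :: real
  assumes good_ks: "good_ks w1 w2 g1 g4 \<delta>1 \<delta>2 \<delta>3"
begin

lemma card_outer_collisions:
  shows "real (card {k. u1 k t = x}) \<le> \<delta>1 * CARD('n word)"
    and "real (card {k. u4 k t = x}) \<le> \<delta>1 * CARD('n word)"
    and "fst t \<noteq> fst t' \<Longrightarrow> real (card {k. u1 k t = u1 k t'}) \<le> \<delta>2 * CARD('n word)"
    and "fst t \<noteq> fst t' \<Longrightarrow> real (card {k. u4 k t = u4 k t'}) \<le> \<delta>2 * CARD('n word)"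
    and "real (card {k. u1 k t = u4 k t'}) \<le> \<delta>3 * CARD('n word)"
proof -
  obtain \<Delta> L R S U where t: "t = (\<Delta>, (L, R), S, U)" by (cases t) auto
  obtain \<Delta>' L' R' S' U' where t': "t' = (\<Delta>', (L', R'), S', U')" by (cases t') auto
  have prk_bounds:
    "\<And>\<Delta> y. prk (\<lambda>k. \<phi>1 (xor k \<Delta>) = y) \<le> \<delta>1" "\<And>\<Delta> y. prk (\<lambda>k. \<phi>4 (xor k \<Delta>) = y) \<le> \<delta>1"
    "\<And>\<Delta> \<Delta>' y. \<Delta> \<noteq> \<Delta>' \<Longrightarrow> prk (\<lambda>k. xor (\<phi>1 (xor k \<Delta>)) (\<phi>1 (xor k \<Delta>')) = y) \<le> \<delta>2"
    "\<And>\<Delta> \<Delta>' y. \<Delta> \<noteq> \<Delta>' \<Longrightarrow> prk (\<lambda>k. xor (\<phi>4 (xor k \<Delta>)) (\<phi>4 (xor k \<Delta>')) = y) \<le> \<delta>2"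
    "\<And>\<Delta> \<Delta>' y. prk (\<lambda>k. xor (\<phi>1 (xor k \<Delta>)) (\<phi>4 (xor k \<Delta>')) = y) \<le> \<delta>3"
    using good_ks[unfolded good_ks_def Let_def ball_simps, folded \<phi>1_def \<phi>4_def] by simp_all
  have "{k. u1 k t = x} = {k. \<phi>1 (xor k \<Delta>) = xor x R}"
    "{k. u4 k t = x} = {k. \<phi>4 (xor k \<Delta>) = xor x S}"
    by (auto simp: t xor_right_eq_iff)
  moreover have "{k. u1 k t = u1 k t'} = {k. xor (\<phi>1 (xor k \<Delta>)) (\<phi>1 (xor k \<Delta>')) = xor R R'}"
    "{k. u4 k t = u4 k t'} = {k. xor (\<phi>4 (xor k \<Delta>)) (\<phi>4 (xor k \<Delta>')) = xor S S'}"
    "{k. u1 k t = u4 k t'} = {k. xor (\<phi>1 (xor k \<Delta>)) (\<phi>4 (xor k \<Delta>')) = xor R S'}"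
    unfolding t t' u1.simps u4.simps by (rule Collect_cong, rule xor_eq_xor_swap)+
  ultimately show
    "real (card {k. u1 k t = x}) \<le> \<delta>1 * CARD('n word)"
    "real (card {k. u4 k t = x}) \<le> \<delta>1 * CARD('n word)"
    "fst t \<noteq> fst t' \<Longrightarrow> real (card {k. u1 k t = u1 k t'}) \<le> \<delta>2 * CARD('n word)"
    "fst t \<noteq> fst t' \<Longrightarrow> real (card {k. u4 k t = u4 k t'}) \<le> \<delta>2 * CARD('n word)"
    "real (card {k. u1 k t = u4 k t'}) \<le> \<delta>3 * CARD('n word)"
    using prk_bounds by (simp_all add: t t' card_le_if_prk_le)
qed

lemma deltas_nonneg: "0 \<le> \<delta>1" "0 \<le> \<delta>2" "0 \<le> \<delta>3"
proof -
  have nonneg: "0 \<le> \<delta>" if "real (card K) \<le> \<delta> * CARD('n word)" for \<delta> :: real and K :: "'n word set"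
  proof -
    have "0 \<le> \<delta> * CARD('n word)" using that of_nat_0_le_iff order_trans by blast
    then show ?thesis by (simp add: zero_le_mult_iff)
  qed
  define t t' :: "'n rk_query" where "t = (0, (0, 0), 0, 0)" and "t' = (1, (0, 0), 0, 0)"
  have "fst t \<noteq> fst t'" by (simp add: t_def t'_def)
  then show "0 \<le> \<delta>1" "0 \<le> \<delta>2" "0 \<le> \<delta>3"
    using nonneg[OF card_outer_collisions(1)[of t 0]] nonneg[OF card_outer_collisions(3)[of t t']]
      nonneg[OF card_outer_collisions(5)[of t t']]
    by simp_all
qed


lemma card_bad_keys:
  "real (card {k. \<not> good_key k P T})
     \<le> CARD('n word) * (2 * \<delta>1 * card P * card T + (\<delta>2 + \<delta>3) * real (card T) ^ 2)"
proof -
  define N where "N = real CARD('n word)"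
  define A where "A = (\<lambda>(p :: 'n word \<times> 'n word, t). {k. u1 k t = fst p \<or> u4 k t = fst p})"
  define B where "B t t' = {k. fst t \<noteq> fst t' \<and> (u1 k t = u1 k t' \<or> u4 k t = u4 k t')}" for t t'
  define C where "C = (\<lambda>(t, t'). {k. u1 k t = u4 k t'})"
  have "{k. \<not> good_key k P T} \<subseteq> (\<Union>i\<in>P \<times> T. A i) \<union> (\<Union>t\<in>T. \<Union>t'\<in>T - {t}. B t t') \<union> (\<Union>i\<in>T \<times> T. C i)"
    unfolding good_key_def A_def B_def C_def by auto
  then have "real (card {k. \<not> good_key k P T})
      \<le> real (card (\<Union>i\<in>P \<times> T. A i)) + real (card (\<Union>t\<in>T. \<Union>t'\<in>T - {t}. B t t'))
        + real (card (\<Union>i\<in>T \<times> T. C i))"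
    by (rule real_card_le_Un3[rotated]) simp
  moreover have "real (card (\<Union>i\<in>P \<times> T. A i)) \<le> real (card (P \<times> T)) * (2 * \<delta>1 * N)"
  proof (rule card_UN_le_mult)
    fix i assume "i \<in> P \<times> T"
    obtain p t where i: "i = (p, t)" by (cases i)
    have "card (A i) \<le> card {k. u1 k t = fst p} + card {k. u4 k t = fst p}"
      by (simp add: A_def i Collect_disj_eq card_Un_le)
    then show "real (card (A i)) \<le> 2 * \<delta>1 * N"
      using card_outer_collisions(1,2)[of t "fst p"] unfolding N_def by linarith
  qed simp
  moreover have "real (card (\<Union>t\<in>T. \<Union>t'\<in>T - {t}. B t t')) \<le> real (card T) ^ 2 / 2 * (2 * \<delta>2 * N)"
  proof (rule card_UN_distinct_pairs_le)
    fix t t' :: "'n rk_query" assume "t \<noteq> t'"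
    have "card (B t t') \<le> card {k. fst t \<noteq> fst t' \<and> u1 k t = u1 k t'} + card {k. fst t \<noteq> fst t' \<and> u4 k t = u4 k t'}"
      by (simp add: B_def conj_disj_distribL Collect_disj_eq card_Un_le)
    then show "real (card (B t t')) \<le> 2 * \<delta>2 * N"
      using card_outer_collisions(3,4)[of t t'] deltas_nonneg(2) unfolding N_def
      by (cases "fst t = fst t'") auto
  qed (auto simp: B_def N_def deltas_nonneg)
  moreover have "real (card (\<Union>i\<in>T \<times> T. C i)) \<le> real (card (T \<times> T)) * (\<delta>3 * N)"
    using card_outer_collisions(5) by (intro card_UN_le_mult) (auto simp: C_def N_def split: prod.split)
  ultimately show ?thesis
    unfolding N_def by (simp add: card_cartesian_product power2_eq_square algebra_simps)
qed

end

definition outer_inputs :: "'n word \<Rightarrow> ('n word \<times> 'n word) set \<Rightarrow> 'n rk_query set \<Rightarrow> 'n word set" where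
  "outer_inputs k P T = fst ` P \<union> u1 k ` T \<union> u4 k ` T"

definition good_middle ::
  "'n word \<Rightarrow> ('n word \<times> 'n word) set \<Rightarrow> 'n rk_query set \<Rightarrow> ('n word \<Rightarrow> 'n word) \<Rightarrow> bool" where
  "good_middle k P T F \<longleftrightarrow>
     (\<forall>t\<in>T. u2 k F t \<notin> outer_inputs k P T \<and> u3 k F t \<notin> outer_inputs k P T) \<and>
     (\<forall>t\<in>T. \<forall>t'\<in>T. t \<noteq> t' \<longrightarrow> u2 k F t \<noteq> u2 k F t' \<and> u3 k F t \<noteq> u3 k F t') \<and>
     (\<forall>t\<in>T. \<forall>t'\<in>T. u2 k F t \<noteq> u3 k F t')"

definition middle_rounds_match :: "'n word \<Rightarrow> 'n rk_query set \<Rightarrow> ('n word \<Rightarrow> 'n word) \<Rightarrow> bool" where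
  "middle_rounds_match k T F \<longleftrightarrow> (\<forall>t\<in>T. F (u2 k F t) = v2 k F t \<and> F (u3 k F t) = v3 k F t)"

lemma middle_values_cong:
  assumes "\<forall>x\<in>outer_inputs k P T. F x = F' x" and "t \<in> T"
  shows "u2 k F t = u2 k F' t" "u3 k F t = u3 k F' t" "v2 k F t = v2 k F' t" "v3 k F t = v3 k F' t"
  using assms by (auto simp: outer_inputs_def u2_def u3_def v2_def v3_def)

lemma good_middle_cong:
  assumes "\<forall>x\<in>outer_inputs k P T. F x = F' x"
  shows "good_middle k P T F \<longleftrightarrow> good_middle k P T F'"
  using middle_values_cong(1,2)[OF assms] unfolding good_middle_def by auto

definition middle_targets :: "'n word \<Rightarrow> 'n rk_query set \<Rightarrow> ('n word \<Rightarrow> 'n word) \<Rightarrow> ('n word \<times> 'n word) set"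
  where "middle_targets k T F = (\<lambda>t. (u2 k F t, v2 k F t)) ` T \<union> (\<lambda>t. (u3 k F t, v3 k F t)) ` T"

lemma middle_rounds_match_iff: "middle_rounds_match k T F \<longleftrightarrow> F \<in> extensions (middle_targets k T F)"
  unfolding middle_rounds_match_def middle_targets_def extensions_def ball_Un by (auto dest!: ball_imageD)

lemma middle_targets_cong:
  assumes "\<forall>x\<in>outer_inputs k P T. F x = F' x"
  shows "middle_targets k T F = middle_targets k T F'"
  using middle_values_cong[OF assms] unfolding middle_targets_def by (auto intro!: image_cong)

lemma middle_targets_fresh:
  assumes "good_middle k P T F"
  defines "Q \<equiv> (\<lambda>x. (x, F x)) ` outer_inputs k P T"
  shows "inj_on fst (Q \<union> middle_targets k T F)" and "fst ` Q \<inter> fst ` middle_targets k T F = {}"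
    and "card (middle_targets k T F) = 2 * card T"
proof -
  define Q2 where "Q2 = (\<lambda>t. (u2 k F t, v2 k F t)) ` T"
  define Q3 where "Q3 = (\<lambda>t. (u3 k F t, v3 k F t)) ` T"
  have graph: "inj_on fst ((\<lambda>t. (f t, g t)) ` T) \<and> card ((\<lambda>t. (f t, g t)) ` T) = card T"
    if "inj_on f T" for f g :: "'n rk_query \<Rightarrow> 'n word"
    using that by (auto simp: inj_on_def intro!: card_image)
  have "inj_on (u2 k F) T" "inj_on (u3 k F) T"
    using assms(1) by (auto simp: good_middle_def inj_on_def)
  then have Q23: "inj_on fst Q2" "inj_on fst Q3" "card Q2 = card T" "card Q3 = card T"
    using graph unfolding Q2_def Q3_def by blast+
  have "fst ` Q = outer_inputs k P T" "fst ` Q2 = u2 k F ` T" "fst ` Q3 = u3 k F ` T"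
    by (force simp: Q_def Q2_def Q3_def)+
  moreover have "outer_inputs k P T \<inter> u2 k F ` T = {}" "outer_inputs k P T \<inter> u3 k F ` T = {}"
    "u2 k F ` T \<inter> u3 k F ` T = {}"
    using assms(1) by (auto simp: good_middle_def)
  ultimately have disjoint: "fst ` Q \<inter> fst ` (Q2 \<union> Q3) = {}" "fst ` Q2 \<inter> fst ` Q3 = {}"
    by (simp_all add: image_Un Int_Un_distrib)
  have inj_Un: "inj_on fst (A \<union> B)"
    if "inj_on fst A" "inj_on fst B" "fst ` A \<inter> fst ` B = {}" for A B :: "('n word \<times> 'n word) set"
    using that by (auto simp: inj_on_Un)
  have "inj_on fst Q" by (auto simp: Q_def inj_on_def)
  moreover have "Q2 \<inter> Q3 = {}" using disjoint(2) by blast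
  moreover have "middle_targets k T F = Q2 \<union> Q3" by (simp add: middle_targets_def Q2_def Q3_def)
  ultimately show "inj_on fst (Q \<union> middle_targets k T F)" "fst ` Q \<inter> fst ` middle_targets k T F = {}"
    "card (middle_targets k T F) = 2 * card T"
    using Q23 disjoint inj_Un by (simp_all add: card_Un_disjoint)
qed

lemma card_good_middle_match:
  "CARD('n word) ^ (2 * card T) * card {F \<in> extensions P. good_middle k P T F \<and> middle_rounds_match k T F}
   = card {F \<in> extensions P. good_middle k P T F}"
proof (rule card_proportional_by_fibres[where f = "\<lambda>F. restrict F (outer_inputs k P T)"])
  \<comment> \<open>On the functions agreeing with a fixed good \<open>F0\<close> on the outer inputs, the middle-round
    targets are fixed and fresh, so matching them costs exactly \<open>2 * card T\<close> values.\<close>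
  fix F0 assume "F0 \<in> {F \<in> extensions P. good_middle k P T F}"
  then have F0: "F0 \<in> extensions P" "good_middle k P T F0" by auto
  define W where "W = outer_inputs k P T"
  define Q where "Q = (\<lambda>x. (x, F0 x)) ` W"
  have fibre: "restrict F W = restrict F0 W \<longleftrightarrow> F \<in> extensions Q" for F
    by (auto simp: Q_def extensions_def restrict_def fun_eq_iff)
  have in_fibre: "F \<in> extensions P \<and> good_middle k P T F \<and> middle_targets k T F = middle_targets k T F0"
    if "F \<in> extensions Q" for F
  proof -
    have "\<forall>x\<in>W. F x = F0 x" using that by (auto simp: Q_def extensions_def)
    moreover have "fst ` P \<subseteq> W" by (auto simp: W_def outer_inputs_def)
    ultimately show ?thesis
      using F0 good_middle_cong[of k P T F F0] middle_targets_cong[of k P T F F0]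
      by (force simp: W_def extensions_def)
  qed
  have "{F \<in> {F \<in> extensions P. good_middle k P T F}. restrict F W = restrict F0 W} = extensions Q"
    using fibre in_fibre by blast
  moreover have "{F \<in> {F \<in> extensions P. good_middle k P T F \<and> middle_rounds_match k T F}.
      restrict F W = restrict F0 W} = extensions (Q \<union> middle_targets k T F0)"
    using fibre in_fibre by (auto simp: middle_rounds_match_iff extensions_Un)
  ultimately show "CARD('n word) ^ (2 * card T)
      * card {F \<in> {F \<in> extensions P. good_middle k P T F \<and> middle_rounds_match k T F}.
          restrict F W = restrict F0 W}
    = card {F \<in> {F \<in> extensions P. good_middle k P T F}. restrict F W = restrict F0 W}"
    using card_extensions_Un[OF middle_targets_fresh(1,2)[OF F0(2)]] middle_targets_fresh(3)[OF F0(2)]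
    unfolding Q_def W_def by (simp add: mult.commute)
qed auto


context
  fixes k :: "'n word" and P :: "('n word \<times> 'n word) set" and T :: "'n rk_query set"
  assumes good_key: "good_key k P T" and inj_P: "inj_on fst P"
begin

lemma outer_inputs_fresh:
  assumes "t \<in> T"
  shows "u1 k t \<notin> fst ` P" "u4 k t \<notin> fst ` P"
  using good_key assms by (auto simp: good_key_def)

lemma card_fixed_value:
  assumes "x \<notin> fst ` P"
  shows "real (card {F \<in> extensions P. F x = y}) = card (extensions P) / CARD('n word)"
  using card_extensions_point[OF inj_P assms, of y]
  by (simp add: eq_divide_eq flip: of_nat_mult)

lemma card_fixed_relation:
  assumes "x \<notin> fst ` P" "x' \<notin> fst ` P" "x \<noteq> x'"
  shows "real (card {F \<in> extensions P. F x = h (F x')}) = card (extensions P) / CARD('n word)"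
  using card_extensions_relation[OF inj_P assms, of h]
  by (simp add: eq_divide_eq flip: of_nat_mult)

lemma card_middle_hits:
  assumes "t \<in> T"
  shows "real (card {F \<in> extensions P. u2 k F t = w \<or> u3 k F t = w})
    \<le> 2 * real (card (extensions P)) / CARD('n word)"
proof -
  have "{F \<in> extensions P. u2 k F t = w \<or> u3 k F t = w}
      = {F \<in> extensions P. F (u1 k t) = xor (c2 k t) w} \<union> {F \<in> extensions P. F (u4 k t) = xor (c3 k t) w}"
    by (auto simp: u2_def u3_def xor_eq_iff)
  then show ?thesis
    using real_card_Un_le[of "{F \<in> extensions P. F (u1 k t) = xor (c2 k t) w}"
        "{F \<in> extensions P. F (u4 k t) = xor (c3 k t) w}"]
      card_fixed_value[OF outer_inputs_fresh(1)[OF assms]] card_fixed_value[OF outer_inputs_fresh(2)[OF assms]]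
    by simp
qed

lemma middle_inputs_differ:
  assumes "rk_injective T" and "t \<in> T" "t' \<in> T" "t \<noteq> t'"
  shows "u1 k t = u1 k t' \<Longrightarrow> u2 k F t \<noteq> u2 k F t'"
    and "u4 k t = u4 k t' \<Longrightarrow> u3 k F t \<noteq> u3 k F t'"
proof -
  obtain \<Delta> L R S U where t: "t = (\<Delta>, (L, R), S, U)" by (cases t) auto
  obtain \<Delta>' L' R' S' U' where t': "t' = (\<Delta>', (L', R'), S', U')" by (cases t') auto
  have "fst t = fst t'" if "u1 k t = u1 k t' \<or> u4 k t = u4 k t'"
    using good_key that assms(2,3) unfolding good_key_def by blast
  then have same_key: "\<Delta> = \<Delta>'" if "u1 k t = u1 k t' \<or> u4 k t = u4 k t'"
    using that by (simp add: t t')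
  have "(L, R) = (L', R') \<longleftrightarrow> (S, U) = (S', U')" if "\<Delta> = \<Delta>'"
    using assms(1) assms(2,3)[unfolded t t' \<open>\<Delta> = \<Delta>'\<close>] unfolding rk_injective_def by blast
  then have distinct: "\<not> (\<Delta> = \<Delta>' \<and> L = L' \<and> R = R')" "\<not> (\<Delta> = \<Delta>' \<and> S = S' \<and> U = U')"
    using assms(4) by (auto simp: t t')
  show "u2 k F t \<noteq> u2 k F t'" if u1: "u1 k t = u1 k t'"
  proof
    assume "u2 k F t = u2 k F t'"
    with u1 have "c2 k t = c2 k t'" by (simp add: u2_def xor_right_inj)
    moreover have "\<Delta> = \<Delta>'" using same_key u1 by blast
    moreover from u1 this have "R = R'" by (simp add: t t' xor_left_inj)
    ultimately show False using distinct(1) by (simp add: t t' xor_left_inj)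
  qed
  show "u3 k F t \<noteq> u3 k F t'" if u4: "u4 k t = u4 k t'"
  proof
    assume "u3 k F t = u3 k F t'"
    with u4 have "c3 k t = c3 k t'" by (simp add: u3_def xor_right_inj)
    moreover have "\<Delta> = \<Delta>'" using same_key u4 by blast
    moreover from u4 this have "S = S'" by (simp add: t t' xor_left_inj)
    ultimately show False using distinct(2) by (simp add: t t' xor_left_inj)
  qed
qed

lemma card_middle_collisions:
  assumes "rk_injective T" and "t \<in> T" "t' \<in> T" "t \<noteq> t'"
  shows "real (card {F \<in> extensions P. u2 k F t = u2 k F t' \<or> u3 k F t = u3 k F t'})
    \<le> 2 * real (card (extensions P)) / CARD('n word)"
proof -
  have "real (card {F \<in> extensions P. u2 k F t = u2 k F t'}) \<le> card (extensions P) / CARD('n word)"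
  proof (cases "u1 k t = u1 k t'")
    case False
    then show ?thesis
      using card_fixed_relation[OF outer_inputs_fresh(1)[OF assms(2)] outer_inputs_fresh(1)[OF assms(3)]]
      by (simp add: u2_def xor_eq_xor_iff)
  qed (use middle_inputs_differ(1)[OF assms] in simp)
  moreover have "real (card {F \<in> extensions P. u3 k F t = u3 k F t'}) \<le> card (extensions P) / CARD('n word)"
  proof (cases "u4 k t = u4 k t'")
    case False
    then show ?thesis
      using card_fixed_relation[OF outer_inputs_fresh(2)[OF assms(2)] outer_inputs_fresh(2)[OF assms(3)]]
      by (simp add: u3_def xor_eq_xor_iff)
  qed (use middle_inputs_differ(2)[OF assms] in simp)
  ultimately show ?thesis
    using real_card_Un_le[of "{F \<in> extensions P. u2 k F t = u2 k F t'}" "{F \<in> extensions P. u3 k F t = u3 k F t'}"]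
    by (simp add: Collect_conj_eq Collect_disj_eq Int_Un_distrib)
qed

lemma card_middle_cross:
  assumes "t \<in> T" "t' \<in> T"
  shows "real (card {F \<in> extensions P. u2 k F t = u3 k F t'}) \<le> card (extensions P) / CARD('n word)"
proof -
  have "u1 k t \<noteq> u4 k t'" using good_key assms by (auto simp: good_key_def)
  then show ?thesis
    using card_fixed_relation[OF outer_inputs_fresh(1)[OF assms(1)] outer_inputs_fresh(2)[OF assms(2)]]
    by (simp add: u2_def u3_def xor_eq_xor_iff)
qed

lemma card_bad_middle:
  assumes "rk_injective T"
  shows "real (card {F \<in> extensions P. \<not> good_middle k P T F})
    \<le> (2 * real (card T) * card P + 6 * real (card T) ^ 2) * card (extensions P) / CARD('n word)"
proof -
  define W where "W = outer_inputs k P T"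
  define b where "b = real (card (extensions P)) / CARD('n word)"
  define H where "H = (\<lambda>(t, w). {F \<in> extensions P. u2 k F t = w \<or> u3 k F t = w})"
  define D where "D t t' = {F \<in> extensions P. u2 k F t = u2 k F t' \<or> u3 k F t = u3 k F t'}" for t t'
  define C where "C = (\<lambda>(t, t'). {F \<in> extensions P. u2 k F t = u3 k F t'})"
  have "{F \<in> extensions P. \<not> good_middle k P T F}
      \<subseteq> (\<Union>i\<in>T \<times> W. H i) \<union> (\<Union>t\<in>T. \<Union>t'\<in>T - {t}. D t t') \<union> (\<Union>i\<in>T \<times> T. C i)"
    unfolding good_middle_def H_def D_def C_def W_def by auto
  then have "real (card {F \<in> extensions P. \<not> good_middle k P T F})
      \<le> real (card (\<Union>i\<in>T \<times> W. H i)) + real (card (\<Union>t\<in>T. \<Union>t'\<in>T - {t}. D t t'))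
        + real (card (\<Union>i\<in>T \<times> T. C i))"
    by (rule real_card_le_Un3[rotated]) simp
  moreover have "real (card (\<Union>i\<in>T \<times> W. H i)) \<le> real (card (T \<times> W)) * (2 * b)"
    by (rule card_UN_le_mult) (auto simp: H_def b_def intro: card_middle_hits)
  moreover have "real (card (\<Union>t\<in>T. \<Union>t'\<in>T - {t}. D t t')) \<le> real (card T) ^ 2 / 2 * (2 * b)"
    by (rule card_UN_distinct_pairs_le) (auto simp: D_def b_def intro: card_middle_collisions assms)
  moreover have "real (card (\<Union>i\<in>T \<times> T. C i)) \<le> real (card (T \<times> T)) * b"
    by (rule card_UN_le_mult) (auto simp: C_def b_def intro: card_middle_cross)
  moreover have "real (card T) * real (card W) * b \<le> real (card T) * (real (card P) + 2 * real (card T)) * b"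
  proof -
    have "real (card W) \<le> real (card (fst ` P)) + real (card (u1 k ` T)) + real (card (u4 k ` T))"
      unfolding W_def outer_inputs_def by (rule real_card_le_Un3) simp_all
    also have "\<dots> \<le> real (card P) + real (card T) + real (card T)"
      by (intro add_mono of_nat_mono card_image_le) simp_all
    finally have "real (card W) \<le> real (card P) + 2 * real (card T)" by simp
    then show ?thesis by (intro mult_right_mono mult_left_mono) (simp_all add: b_def)
  qed
  ultimately have "real (card {F \<in> extensions P. \<not> good_middle k P T F})
      \<le> (2 * real (card T) * card P + 6 * real (card T) ^ 2) * b"
    by (simp add: card_cartesian_product power2_eq_square algebra_simps)
  then show ?thesis by (simp add: b_def)
qed

lemma card_consistent_ge:
  assumes "rk_injective T"
  shows "(1 - (2 * real (card T) * card P + 6 * real (card T) ^ 2) / CARD('n word)) * card (extensions P)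
    \<le> real CARD('n word) ^ (2 * card T) * card {F. consistent F (\<lambda>\<Delta>. KAF F (xor k \<Delta>)) (P, T)}"
proof -
  define G where "G = {F \<in> extensions P. good_middle k P T F}"
  have "card G + card {F \<in> extensions P. \<not> good_middle k P T F} = card (extensions P)"
    unfolding G_def by (subst card_Un_disjoint[symmetric]) (auto intro: arg_cong[where f = card])
  then have "(1 - (2 * real (card T) * card P + 6 * real (card T) ^ 2) / CARD('n word)) * card (extensions P)
      \<le> card G"
    using card_bad_middle[OF assms] by (simp add: algebra_simps flip: of_nat_add)
  also have "card G = CARD('n word) ^ (2 * card T)
      * card {F \<in> extensions P. good_middle k P T F \<and> middle_rounds_match k T F}"
    unfolding G_def by (rule card_good_middle_match[symmetric])
  also have "\<dots> \<le> CARD('n word) ^ (2 * card T) * card {F. consistent F (\<lambda>\<Delta>. KAF F (xor k \<Delta>)) (P, T)}"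
  proof (intro mult_left_mono card_mono subsetI)
    fix F assume "F \<in> {F \<in> extensions P. good_middle k P T F \<and> middle_rounds_match k T F}"
    then have "F \<in> extensions P" "middle_rounds_match k T F" by auto
    moreover have "KAF F (xor k \<Delta>) X = Y" if "(\<Delta>, X, Y) \<in> T" for \<Delta> X Y
      using \<open>middle_rounds_match k T F\<close> that KAF_eq_if_middle_rounds_match[of "(\<Delta>, X, Y)"]
      by (cases X, cases Y) (auto simp: middle_rounds_match_def)
    ultimately show "F \<in> {F. consistent F (\<lambda>\<Delta>. KAF F (xor k \<Delta>)) (P, T)}"
      by (auto simp: consistent_def extensions_def)
  qed simp_all
  finally show ?thesis by (simp flip: of_nat_mult of_nat_power)
qed

end

lemma consistent_ratio:
  fixes P :: "('n word \<times> 'n word) set" and T :: "'n rk_query set"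
  assumes "good_key k P T" and "card P \<le> qf" and "card T \<le> qe"
  defines "\<epsilon> \<equiv> (2 * real qe * qf + 7 * real qe ^ 2) / CARD('n word)"
  shows "(1 - \<epsilon>) * card (ciphers_extending T) * card (extensions P)
    \<le> real (card (ideal_ciphers :: ('n word \<Rightarrow> 'n block \<Rightarrow> 'n block) set))
      * card {F. consistent F (\<lambda>\<Delta>. KAF F (xor k \<Delta>)) (P, T)}"
proof (cases "\<epsilon> < 1 \<and> ciphers_extending T \<noteq> {} \<and> extensions P \<noteq> {}")
  case False
  then have "(1 - \<epsilon>) * card (ciphers_extending T) * card (extensions P) \<le> 0"
    by (auto simp: mult_nonpos_nonneg)
  then show ?thesis by (rule order_trans) simp
next
  case True
  then obtain IC F0 where "IC \<in> ciphers_extending T" "F0 \<in> extensions P" by blast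
  then have rk: "rk_injective T" and inj: "inj_on fst P"
    by (auto intro: rk_injective_if_extending inj_on_fst_if_extensions)
  define N where "N = real CARD('n word)"
  define c where "c = card T"
  define e where "e = (2 * real c * card P + 6 * real c ^ 2) / N"
  define \<eta> where "\<eta> = real c ^ 2 / N ^ 2"
  have N: "N \<ge> 1" and card_block: "real CARD('n block) = N ^ 2"
    by (simp_all add: N_def power2_eq_square)
  with True assms(2,3) have "real c \<le> N ^ 2" and "e + \<eta> \<le> \<epsilon>"
    using collision_budget[of N "card P" qf c qe] by (simp_all add: c_def e_def \<eta>_def \<epsilon>_def N_def)
  then have c_le: "c \<le> CARD('n block)"
    unfolding card_block[symmetric] by linarith
  have "0 \<le> e" "0 \<le> \<eta>" using N by (simp_all add: e_def \<eta>_def)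
  moreover have "(1 - \<eta>) * (1 - e) = 1 - \<eta> - e + \<eta> * e" by (simp add: algebra_simps)
  ultimately have "1 - \<epsilon> \<le> (1 - \<eta>) * (1 - e)" and "0 \<le> 1 - \<eta>"
    using True \<open>e + \<eta> \<le> \<epsilon>\<close> mult_nonneg_nonneg[of \<eta> e] by linarith+
  then have "(1 - \<epsilon>) * card (ciphers_extending T) * card (extensions P)
      \<le> (1 - \<eta>) * card (ciphers_extending T) * ((1 - e) * card (extensions P))"
    using mult_right_mono[of "1 - \<epsilon>" "(1 - \<eta>) * (1 - e)" "card (ciphers_extending T) * card (extensions P)"]
    by (simp add: mult_ac)
  also have "\<dots> \<le> (1 - \<eta>) * card (ciphers_extending T) * (N ^ (2 * c)
      * card {F. consistent F (\<lambda>\<Delta>. KAF F (xor k \<Delta>)) (P, T)})"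
    using card_consistent_ge[OF assms(1) inj rk] \<open>0 \<le> 1 - \<eta>\<close>
    by (intro mult_left_mono) (simp_all add: e_def N_def c_def)
  also have "\<dots> = (N ^ 2) ^ c * (1 - real c ^ 2 / N ^ 2) * card (ciphers_extending T)
      * card {F. consistent F (\<lambda>\<Delta>. KAF F (xor k \<Delta>)) (P, T)}"
    unfolding \<eta>_def power_mult by (simp add: mult_ac)
  also have "\<dots> \<le> real (card (ideal_ciphers :: ('n word \<Rightarrow> 'n block \<Rightarrow> 'n block) set))
      * card {F. consistent F (\<lambda>\<Delta>. KAF F (xor k \<Delta>)) (P, T)}"
    using card_ciphers_extending_ge[OF c_le[unfolded c_def]] unfolding card_block c_def
    by (intro mult_right_mono) simp_all
  finally show ?thesis .
qed


section \<open>The real and the ideal world\<close>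

lemma pmf_real_world:
  "pmf (real_world w0 w1 w2 w3 [g1, g2, g3, g4] A) True
   = (\<Sum>u\<in>UNIV. pmf (run A (snd u) (\<lambda>\<Delta>. KAF (snd u) (xor (fst u) \<Delta>))
        (\<lambda>\<Delta>. inv (KAF (snd u) (xor (fst u) \<Delta>)))) True) / card (UNIV :: ('n word \<times> ('n word \<Rightarrow> 'n word)) set)"
proof -
  have "(\<Sum>u\<in>UNIV. f u) = (\<Sum>k\<in>UNIV. \<Sum>F\<in>UNIV. f (k, F))" for f :: "'n word \<times> ('n word \<Rightarrow> 'n word) \<Rightarrow> real"
    by (simp add: sum.cartesian_product UNIV_Times_UNIV[symmetric] del: UNIV_Times_UNIV)
  then show ?thesis
    by (simp add: real_world_def pmf_bind_pmf_of_set sum_divide_distrib card_cartesian_product mult_ac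
        UNIV_Times_UNIV[symmetric] del: UNIV_Times_UNIV)
qed

lemma pmf_ideal_world:
  fixes A :: "('n word, 'n block) dist"
  shows "pmf (ideal_world A) True
   = (\<Sum>u\<in>UNIV \<times> ideal_ciphers \<times> UNIV. pmf (run A (snd (snd u)) (\<lambda>\<Delta>. fst (snd u) (xor (fst u) \<Delta>))
        (\<lambda>\<Delta>. inv (fst (snd u) (xor (fst u) \<Delta>)))) True)
     / card (UNIV \<times> ideal_ciphers \<times> (UNIV :: ('n word \<Rightarrow> 'n word) set) ::
         ('n word \<times> ('n word \<Rightarrow> 'n block \<Rightarrow> 'n block) \<times> ('n word \<Rightarrow> 'n word)) set)"
proof -
  have "{IC :: 'n word \<Rightarrow> 'n block \<Rightarrow> 'n block. \<forall>key. bij (IC key)} \<noteq> {}"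
    using id_in_ideal_ciphers by (auto simp: ideal_ciphers_def)
  then show ?thesis
    unfolding ideal_world_def ideal_ciphers_def
    by (simp add: pmf_bind_pmf_of_set sum.cartesian_product card_cartesian_product sum_divide_distrib
        split_def divide_divide_eq_left mult_ac)
qed

lemma card_ideal_worlds_consistent:
  "card {u \<in> UNIV \<times> ideal_ciphers \<times> UNIV.
      consistent (snd (snd u)) (\<lambda>\<Delta>. fst (snd u) (xor (fst u) \<Delta>)) \<tau> \<and> fst u = k}
   = card (ciphers_extending (snd \<tau>) :: ('n word \<Rightarrow> 'n block \<Rightarrow> 'n block) set)
     * card (extensions (fst \<tau>) :: ('n word \<Rightarrow> 'n word) set)"
proof -
  have "{u \<in> UNIV \<times> ideal_ciphers \<times> UNIV.
      consistent (snd (snd u)) (\<lambda>\<Delta>. fst (snd u) (xor (fst u) \<Delta>)) \<tau> \<and> fst u = k}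
    = Pair k ` ({IC \<in> ideal_ciphers. IC \<circ> xor k \<in> ciphers_extending (snd \<tau>)} \<times> extensions (fst \<tau>))"
    by (auto simp: consistent_iff_extensions ciphers_extending_def ideal_ciphers_def image_iff)
  then show ?thesis
    by (simp add: card_image inj_on_def card_cartesian_product card_ciphers_extending_comp[OF bij_xor])
qed

lemma card_real_worlds_consistent:
  "card {u \<in> UNIV. consistent (snd u) (\<lambda>\<Delta>. KAF (snd u) (xor (fst u) \<Delta>)) \<tau> \<and> fst u = k}
   = card {F. consistent F (\<lambda>\<Delta>. KAF F (xor k \<Delta>)) \<tau>}"
proof -
  have "{u \<in> UNIV. consistent (snd u) (\<lambda>\<Delta>. KAF (snd u) (xor (fst u) \<Delta>)) \<tau> \<and> fst u = k}
      = Pair k ` {F. consistent F (\<lambda>\<Delta>. KAF F (xor k \<Delta>)) \<tau>}"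
    by auto
  then show ?thesis by (simp add: card_image inj_on_def)
qed

lemma card_ideal_worlds:
  "card (UNIV \<times> ideal_ciphers \<times> UNIV :: ('n word \<times> ('n word \<Rightarrow> 'n block \<Rightarrow> 'n block) \<times> ('n word \<Rightarrow> 'n word)) set)
   = CARD('n word) * card (ideal_ciphers :: ('n word \<Rightarrow> 'n block \<Rightarrow> 'n block) set) * CARD('n word \<Rightarrow> 'n word)"
  by (simp add: card_cartesian_product)

context
  fixes \<delta>1 \<delta>2 \<delta>3 :: real and qf qe :: nat
  assumes good_ks: "good_ks w1 w2 g1 g4 \<delta>1 \<delta>2 \<delta>3"
begin

lemma sum_expect_bad_keys_le:
  assumes "bounded A qf qe"
  shows "(\<Sum>k\<in>UNIV. expect_run (\<lambda>\<tau> _. of_bool (\<not> good_key k (fst \<tau>) (snd \<tau>))) A ({}, {}) F E)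
    \<le> CARD('n word) * (2 * \<delta>1 * qe * qf + (\<delta>2 + \<delta>3) * real qe ^ 2)"
proof -
  have "(\<Sum>k\<in>UNIV. expect_run (\<lambda>\<tau> _. of_bool (\<not> good_key k (fst \<tau>) (snd \<tau>))) A ({}, {}) F E)
      = expect_run (\<lambda>\<tau> _. real (card {k. \<not> good_key k (fst \<tau>) (snd \<tau>)})) A ({}, {}) F E"
    by (simp add: sum_expect_run)
  also have "\<dots> \<le> CARD('n word) * (2 * \<delta>1 * qe * qf + (\<delta>2 + \<delta>3) * real qe ^ 2)"
  proof (rule expect_run_le[OF assms])
    fix \<tau> :: "('n word, 'n block) transcript"
    assume "card (fst \<tau>) \<le> qf" "card (snd \<tau>) \<le> qe"
    then have "2 * \<delta>1 * card (fst \<tau>) * card (snd \<tau>) + (\<delta>2 + \<delta>3) * real (card (snd \<tau>)) ^ 2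
        \<le> 2 * \<delta>1 * qf * qe + (\<delta>2 + \<delta>3) * real qe ^ 2"
      using deltas_nonneg[OF good_ks]
      by (intro add_mono mult_left_mono mult_mono power_mono) simp_all
    then have "real CARD('n word) * (2 * \<delta>1 * card (fst \<tau>) * card (snd \<tau>)
          + (\<delta>2 + \<delta>3) * real (card (snd \<tau>)) ^ 2)
        \<le> CARD('n word) * (2 * \<delta>1 * qe * qf + (\<delta>2 + \<delta>3) * real qe ^ 2)"
      by (simp add: mult_left_mono mult_ac)
    then show "real (card {k. \<not> good_key k (fst \<tau>) (snd \<tau>)})
        \<le> CARD('n word) * (2 * \<delta>1 * qe * qf + (\<delta>2 + \<delta>3) * real qe ^ 2)"
      using card_bad_keys[OF good_ks, of "fst \<tau>" "snd \<tau>"] by linarith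
  qed
  finally show ?thesis .
qed

lemma good_transcript_ratio:
  fixes \<tau> :: "('n word, 'n block) transcript"
  assumes "card (fst \<tau>) \<le> qf" "card (snd \<tau>) \<le> qe" "good_key k (fst \<tau>) (snd \<tau>)"
  defines "\<epsilon> \<equiv> (2 * real qe * qf + 7 * real qe ^ 2) / real CARD('n word)"
  shows "(1 - \<epsilon>) * real (card {u \<in> UNIV \<times> ideal_ciphers \<times> UNIV.
        consistent (snd (snd u)) (\<lambda>\<Delta>. fst (snd u) (xor (fst u) \<Delta>)) \<tau> \<and> fst u = k})
      / card (UNIV \<times> ideal_ciphers \<times> UNIV
          :: ('n word \<times> ('n word \<Rightarrow> 'n block \<Rightarrow> 'n block) \<times> ('n word \<Rightarrow> 'n word)) set)
    \<le> card {u \<in> UNIV. consistent (snd u) (\<lambda>\<Delta>. KAF (snd u) (xor (fst u) \<Delta>)) \<tau> \<and> fst u = k}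
      / card (UNIV :: ('n word \<times> ('n word \<Rightarrow> 'n word)) set)"
proof -
  define IC where "IC = real (card (ideal_ciphers :: ('n word \<Rightarrow> 'n block \<Rightarrow> 'n block) set))"
  define M where "M = real CARD('n word) * CARD('n word \<Rightarrow> 'n word)"
  have "IC > 0" "M > 0"
    using id_in_ideal_ciphers by (auto simp: IC_def M_def card_gt_0_iff)
  moreover have "(1 - \<epsilon>) * card (ciphers_extending (snd \<tau>)) * card (extensions (fst \<tau>))
      \<le> IC * card {F. consistent F (\<lambda>\<Delta>. KAF F (xor k \<Delta>)) \<tau>}"
    using consistent_ratio[OF assms(3,1,2)] by (simp add: \<epsilon>_def IC_def)
  ultimately show ?thesis
    unfolding card_ideal_worlds_consistent card_real_worlds_consistent card_ideal_worlds
    by (simp add: card_cartesian_product UNIV_Times_UNIV[symmetric] M_def[symmetric] IC_def[symmetric]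
        divide_le_eq le_divide_eq mult_ac del: UNIV_Times_UNIV)
qed
lemma bad_key_mass_le:
  assumes "bounded A qf qe"
  shows "(\<Sum>u\<in>UNIV \<times> ideal_ciphers \<times> UNIV. expect_run (\<lambda>\<tau> _. of_bool (\<not> good_key (fst u) (fst \<tau>) (snd \<tau>)))
        A ({}, {}) (snd (snd u)) (\<lambda>\<Delta>. fst (snd u) (xor (fst u) \<Delta>)))
      / card (UNIV \<times> ideal_ciphers \<times> UNIV
          :: ('n word \<times> ('n word \<Rightarrow> 'n block \<Rightarrow> 'n block) \<times> ('n word \<Rightarrow> 'n word)) set)
    \<le> 2 * \<delta>1 * qe * qf + (\<delta>2 + \<delta>3) * real qe ^ 2"
proof -
  define bad where "bad k F IC = expect_run (\<lambda>\<tau> _. of_bool (\<not> good_key k (fst \<tau>) (snd \<tau>))) A ({}, {}) F IC"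
    for k F and IC :: "'n word \<Rightarrow> 'n block \<Rightarrow> 'n block"
  \<comment> \<open>The key is independent of the ideal cipher: composing with \<open>xor k\<close> permutes \<open>ideal_ciphers\<close>.\<close>
  have shift: "(\<Sum>IC\<in>ideal_ciphers. \<Sum>F\<in>UNIV. bad k F (IC \<circ> xor k)) = (\<Sum>IC\<in>ideal_ciphers. \<Sum>F\<in>UNIV. bad k F IC)"
    for k
    using sum.reindex_bij_betw[OF bij_betw_comp_ideal_ciphers[OF bij_xor[of k]], of "\<lambda>IC. \<Sum>F\<in>UNIV. bad k F IC"]
    by simp
  have "(\<Sum>u\<in>UNIV \<times> ideal_ciphers \<times> UNIV. bad (fst u) (snd (snd u)) (\<lambda>\<Delta>. fst (snd u) (xor (fst u) \<Delta>)))
      = (\<Sum>k\<in>UNIV. \<Sum>IC\<in>ideal_ciphers. \<Sum>F\<in>UNIV. bad k F (IC \<circ> xor k))"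
    by (simp add: sum.cartesian_product comp_def split_def)
  also have "\<dots> = (\<Sum>k\<in>UNIV. \<Sum>IC\<in>ideal_ciphers. \<Sum>F\<in>UNIV. bad k F IC)"
    by (simp only: shift)
  also have "\<dots> = (\<Sum>IC\<in>ideal_ciphers. \<Sum>k\<in>UNIV. \<Sum>F\<in>UNIV. bad k F IC)"
    by (rule sum.swap)
  also have "\<dots> = (\<Sum>IC\<in>ideal_ciphers. \<Sum>F\<in>UNIV. \<Sum>k\<in>UNIV. bad k F IC)"
    by (intro sum.cong refl sum.swap)
  also have "\<dots> \<le> (\<Sum>IC\<in>(ideal_ciphers :: ('n word \<Rightarrow> 'n block \<Rightarrow> 'n block) set). \<Sum>F\<in>(UNIV :: ('n word \<Rightarrow> 'n word) set).
      CARD('n word) * (2 * \<delta>1 * qe * qf + (\<delta>2 + \<delta>3) * real qe ^ 2))"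
    unfolding bad_def using sum_expect_bad_keys_le[OF assms] by (intro sum_mono) simp
  also have "\<dots> = real (card (ideal_ciphers :: ('n word \<Rightarrow> 'n block \<Rightarrow> 'n block) set))
      * CARD('n word \<Rightarrow> 'n word) * CARD('n word) * (2 * \<delta>1 * qe * qf + (\<delta>2 + \<delta>3) * real qe ^ 2)"
    by simp
  finally have "(\<Sum>u\<in>UNIV \<times> ideal_ciphers \<times> UNIV. bad (fst u) (snd (snd u)) (\<lambda>\<Delta>. fst (snd u) (xor (fst u) \<Delta>)))
      \<le> (2 * \<delta>1 * qe * qf + (\<delta>2 + \<delta>3) * real qe ^ 2)
        * card (UNIV \<times> ideal_ciphers \<times> UNIV
          :: ('n word \<times> ('n word \<Rightarrow> 'n block \<Rightarrow> 'n block) \<times> ('n word \<Rightarrow> 'n word)) set)"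
    by (simp add: card_ideal_worlds mult_ac)
  moreover have "0 < card (UNIV \<times> ideal_ciphers \<times> UNIV
      :: ('n word \<times> ('n word \<Rightarrow> 'n block \<Rightarrow> 'n block) \<times> ('n word \<Rightarrow> 'n word)) set)"
    using id_in_ideal_ciphers by (auto simp: card_gt_0_iff)
  ultimately show ?thesis
    by (simp add: bad_def pos_divide_le_eq)
qed

lemma ideal_minus_real_le:
  assumes "bounded A qf qe"
  shows "pmf (ideal_world A) True - pmf (real_world w0 w1 w2 w3 [g1, g2, g3, g4] A) True
    \<le> 2 * \<delta>1 * real qe * real qf + (\<delta>2 + \<delta>3) * real qe ^ 2
      + (2 * real qe * real qf + 7 * real qe ^ 2) / 2 ^ LENGTH('n)"
proof -
  have "pmf (ideal_world A) True - pmf (real_world w0 w1 w2 w3 [g1, g2, g3, g4] A) True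
    \<le> (2 * real qe * qf + 7 * real qe ^ 2) / CARD('n word)
      + (\<Sum>u\<in>UNIV \<times> ideal_ciphers \<times> UNIV. expect_run (\<lambda>\<tau> _. of_bool (\<not> good_key (fst u) (fst \<tau>) (snd \<tau>)))
        A ({}, {}) (snd (snd u)) (\<lambda>\<Delta>. fst (snd u) (xor (fst u) \<Delta>)))
      / card (UNIV \<times> ideal_ciphers \<times> UNIV
          :: ('n word \<times> ('n word \<Rightarrow> 'n block \<Rightarrow> 'n block) \<times> ('n word \<Rightarrow> 'n word)) set)"
    unfolding pmf_ideal_world pmf_real_world
    by (rule h_coefficient[where FR = snd and ER = "\<lambda>u \<Delta>. KAF (snd u) (xor (fst u) \<Delta>)" and keyR = fst
          and FI = "\<lambda>u. snd (snd u)" and EI = "\<lambda>u \<Delta>. fst (snd u) (xor (fst u) \<Delta>)" and keyI = fst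
          and good = "\<lambda>\<tau> k. good_key k (fst \<tau>) (snd \<tau>)" and qf = qf and qe = qe])
      (assumption | rule good_transcript_ratio | simp add: bij_KAF bij_if_ideal_cipher assms)+
  then show ?thesis
    using bad_key_mass_le[OF assms] by (simp add: card_word)
qed

end

end


primrec negate :: "('a, 'b) dist \<Rightarrow> ('a, 'b) dist" where
  "negate (Out c) = Out (\<not> c)"
| "negate (Coin g) = Coin (\<lambda>c. negate (g c))"
| "negate (QF x g) = QF x (\<lambda>y. negate (g y))"
| "negate (QE d X g) = QE d X (\<lambda>Y. negate (g Y))"
| "negate (QD d Y g) = QD d Y (\<lambda>X. negate (g X))"

lemma bounded_negate: "bounded (negate A) a b = bounded A a b"
  by (induction A arbitrary: a b) auto

lemma run_negate: "run (negate A) F E D = map_pmf Not (run A F E D)"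
  by (induction A) (simp_all add: map_bind_pmf)

lemma pmf_map_Not_True: "pmf (map_pmf Not p) True = 1 - pmf p True"
  using pmf_map_inj'[of Not p False] by (simp add: pmf_False_conv_True inj_def)

lemma real_world_negate:
  "real_world w0 w1 w2 w3 gs (negate A) = map_pmf Not (real_world w0 w1 w2 w3 gs A)"
  by (simp add: real_world_def run_negate map_bind_pmf)

lemma ideal_world_negate: "ideal_world (negate A) = map_pmf Not (ideal_world A)"
  by (simp add: ideal_world_def run_negate map_bind_pmf)

theorem theorem2:
  fixes w0 w1 w2 w3 g1 g2 g3 g4 :: "'n::len word \<Rightarrow> 'n word"
    and \<delta>1 \<delta>2 \<delta>3 :: real and qf qe :: nat
  assumes "good_ks w1 w2 g1 g4 \<delta>1 \<delta>2 \<delta>3"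
  shows "adv_rka w0 w1 w2 w3 [g1, g2, g3, g4] qf qe
           \<le> 2 * \<delta>1 * real qe * real qf + (\<delta>2 + \<delta>3) * real qe ^ 2
             + (2 * real qe * real qf + 7 * real qe ^ 2) / 2 ^ LENGTH('n)"
proof -
  interpret key_schedule w0 w1 w2 w3 g1 g2 g3 g4 .
  \<comment> \<open>Negating the output of \<open>A\<close> turns the one-sided bound into the other direction.\<close>
  have bound: "\<bar>pmf (real_world w0 w1 w2 w3 [g1, g2, g3, g4] A) True - pmf (ideal_world A) True\<bar>
      \<le> 2 * \<delta>1 * real qe * real qf + (\<delta>2 + \<delta>3) * real qe ^ 2
        + (2 * real qe * real qf + 7 * real qe ^ 2) / 2 ^ LENGTH('n)"
    if "bounded A qf qe" for A
    using ideal_minus_real_le[OF assms that] ideal_minus_real_le[OF assms, of "negate A"] that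
    by (simp add: bounded_negate real_world_negate ideal_world_negate pmf_map_Not_True abs_le_iff)
  show ?thesis
    unfolding adv_rka_def by (rule cSUP_least) (auto intro: bound exI[of _ "Out True"])
qed

end
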